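(* Let $H$ be a non-degenerate Hermitian form on $\mathbb{C}^n\times\mathbb{C}^n$ with values in $\mathbb{R}^k$. Then $\dim_{\mathbb{R}}\mathfrak g_H^2=\dim_{\mathbb{R}}\tilde{\mathfrak g}_H^2$.
   Context: $H=(H^1,\dots,H^k)$ is complex-linear in the first argument and antilinear in the second; non-degenerate means (i) $H^1,\dots,H^k$ are $\mathbb{R}$-linearly independent and (ii) $H(z,z')=0$ for all $z'$ implies $z=0$. Coordinates $z\in\mathbb{C}^n$, $w\in\mathbb{C}^k$; $v\frac{\partial}{\partial z}=\sum_j v_j\frac{\partial}{\partial z_j}$. The following real spaces of holomorphic vector fields on $\mathbb{C}^{n+k}$, with the bracket of vector fields, are graded pieces of the Lie algebra $\mathfrak g_H$ of infinitesimal automorphisms of $Q_H=\{\operatorname{Im}w=H(z,z)\}$: $\mathfrak g_H^{-2}=\{q\frac{\partial}{\partial w}:q\in\mathbb{R}^k\}$; $\mathfrak g_H^{-1}=\{p\frac{\partial}{\partial z}+2iH(z,p)\frac{\partial}{\partial w}:p\in\mathbb{C}^n\}$; $\mathfrak g_H^0=\{Cz\frac{\partial}{\partial z}+sw\frac{\partial}{\partial w}\}$ with $C\in M(n,\mathbb{C})$, $s\in M(k,\mathbb{R})$, $2\operatorname{Re}H(Cz,z)=sH(z,z)$ for all $z$; $\mathfrak g_H^2=\{B(z,w)\frac{\partial}{\partial z}+r(w,w)\frac{\partial}{\partial w}\}$ with $B$ a $\mathbb{C}^n$-valued complex bilinear form on $\mathbb{C}^n\times\mathbb{C}^k$, $r$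 a $\mathbb{C}^k$-valued symmetric complex bilinear form on $\mathbb{C}^k\times\mathbb{C}^k$, satisfying $\operatorname{Re}H(B(z,u),z)=r(H(z,z),u)$ and $\operatorname{Im}H(B(z,H(z,z)),z)=0$ for all $z\in\mathbb{C}^n$, $u\in\mathbb{R}^k$. Tanaka prolongation: $\tilde{\mathfrak g}_H^0=\mathfrak g_H^0$, $\tilde{\mathfrak g}_H^{-1}=\mathfrak g_H^{-1}$, $\tilde{\mathfrak g}_H^{-2}=\mathfrak g_H^{-2}$. For $L=1,2$, $\tilde{\mathfrak g}_H^L$ is the real vector space of linear maps $X_L:\mathfrak g_H^{-1}\to\tilde{\mathfrak g}_H^{L-1}$ for which there exists a linear map $X_L':\mathfrak g_H^{-2}\to\tilde{\mathfrak g}_H^{L-2}$ with $[X_L(X_{-1}),Y_{-1}]-[X_L(Y_{-1}),X_{-1}]=X_L'([X_{-1},Y_{-1}])$ and $[X_L'(X_{-2}),X_{-1}]=[X_L(X_{-1}),X_{-2}]$ for all $X_{-1},Y_{-1}\in\mathfrak g_H^{-1}$, $X_{-2}\in\mathfrak g_H^{-2}$. Here brackets among $\mathfrak g_H^{-2},\mathfrak g_H^{-1},\mathfrak g_H^0$ are those of vector fields, and for $X_1\in\tilde{\mathfrak g}_H^1$ one sets $[X_1,X_{-1}]=X_1(X_{-1})=-[X_{-1},X_1]$, $[X_1,X_{-2}]=X_1'(X_{-2})=-[X_{-2},X_1]$. *)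

theory Defs
  imports "HOL-Analysis.Analysis" "HOL-Library.Function_Algebras"
begin

text \<open>Points of C^(n+k) are pairs (z,w) with z in C^n, w in C^k; holomorphic vector
  fields are represented by their coefficient maps C^(n+k) -> C^(n+k).\<close>

type_synonym ('n,'k) pt = "(complex^'n) \<times> (complex^'k)"
type_synonym ('n,'k) vf = "('n,'k) pt \<Rightarrow> ('n,'k) pt"

definition vf_bracket :: "('n::finite,'k::finite) vf \<Rightarrow> ('n,'k) vf \<Rightarrow> ('n,'k) vf" where
  "vf_bracket X Y = (\<lambda>p. frechet_derivative Y (at p) (X p) - frechet_derivative X (at p) (Y p))"

definition clin :: "(complex^'a \<Rightarrow> complex^'b) \<Rightarrow> bool" where
  "clin f \<longleftrightarrow> (\<forall>x y. f (x + y) = f x + f y) \<and> (\<forall>c x. f (c *s x) = c *s f x)"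

definition cbilin :: "(complex^'a \<Rightarrow> complex^'b \<Rightarrow> complex^'c) \<Rightarrow> bool" where
  "cbilin B \<longleftrightarrow> (\<forall>w. clin (\<lambda>z. B z w)) \<and> (\<forall>z. clin (B z))"

definition hermitian_form :: "(complex^'n \<Rightarrow> complex^'n \<Rightarrow> complex^'k) \<Rightarrow> bool" where
  "hermitian_form H \<longleftrightarrow>
     (\<forall>z'. clin (\<lambda>z. H z z')) \<and>
     (\<forall>z z1 z2. H z (z1 + z2) = H z z1 + H z z2) \<and>
     (\<forall>z c z'. H z (c *s z') = cnj c *s H z z') \<and>
     (\<forall>z z'. H z' z = (\<chi> j. cnj (H z z' $ j)))"

definition nondegenerate :: "(complex^'n \<Rightarrow> complex^'n \<Rightarrow> complex^'k) \<Rightarrow> bool" where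
  "nondegenerate H \<longleftrightarrow>
     (\<forall>a::real^'k. (\<forall>z z'. (\<Sum>j\<in>UNIV. complex_of_real (a $ j) * (H z z' $ j)) = 0) \<longrightarrow> a = 0) \<and>
     (\<forall>z. (\<forall>z'. H z z' = 0) \<longrightarrow> z = 0)"

definition rvec :: "real^'k \<Rightarrow> complex^'k" where
  "rvec q = (\<chi> j. complex_of_real (q $ j))"

definition rmat :: "real^'k^'k \<Rightarrow> complex^'k \<Rightarrow> complex^'k" where
  "rmat s w = (\<chi> j. \<Sum>l\<in>UNIV. complex_of_real (s $ j $ l) * w $ l)"

definition g_m2 :: "(complex^'n \<Rightarrow> complex^'n \<Rightarrow> complex^'k) \<Rightarrow> ('n::finite,'k::finite) vf set" where
  "g_m2 H = {(\<lambda>(z,w). (0, rvec q)) | q. True}"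

definition g_m1 :: "(complex^'n \<Rightarrow> complex^'n \<Rightarrow> complex^'k) \<Rightarrow> ('n::finite,'k::finite) vf set" where
  "g_m1 H = {(\<lambda>(z,w). (p, (2 * \<i>) *s H z p)) | p. True}"

definition g_0 :: "(complex^'n \<Rightarrow> complex^'n \<Rightarrow> complex^'k) \<Rightarrow> ('n::finite,'k::finite) vf set" where
  "g_0 H = {(\<lambda>(z,w). (C *v z, rmat s w)) | (C :: complex^'n^'n) (s :: real^'k^'k).
              \<forall>z. (2::real) *\<^sub>R (\<chi> j. Re (H (C *v z) z $ j)) = s *v (\<chi> j. Re (H z z $ j))}"

definition g_2 :: "(complex^'n \<Rightarrow> complex^'n \<Rightarrow> complex^'k) \<Rightarrow> ('n::finite,'k::finite) vf set" where
  "g_2 H = {(\<lambda>(z,w). (B z w, r w w)) | (B :: complex^'n \<Rightarrow> complex^'k \<Rightarrow> complex^'n)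
              (r :: complex^'k \<Rightarrow> complex^'k \<Rightarrow> complex^'k).
              cbilin B \<and> cbilin r \<and> (\<forall>u v. r u v = r v u) \<and>
              (\<forall>z (u::real^'k). (\<chi> j. complex_of_real (Re (H (B z (rvec u)) z $ j))) = r (H z z) (rvec u)) \<and>
              (\<forall>z j. Im (H (B z (H z z)) z $ j) = 0)}"

definition vscale :: "real \<Rightarrow> ('n::finite,'k::finite) vf \<Rightarrow> ('n,'k) vf" where
  "vscale c X = (\<lambda>p. c *\<^sub>R X p)"

definition vscale2 :: "real \<Rightarrow> (('n::finite,'k::finite) vf \<Rightarrow> ('n,'k) vf) \<Rightarrow> (('n,'k) vf \<Rightarrow> ('n,'k) vf)" where
  "vscale2 c F = (\<lambda>A. vscale c (F A))"

definition vscale3 :: "real \<Rightarrow> (('n::finite,'k::finite) vf \<Rightarrow> (('n,'k) vf \<Rightarrow> ('n,'k) vf)) \<Rightarrow> (('n,'k) vf \<Rightarrow> (('n,'k) vf \<Rightarrow> ('n,'k) vf))" where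
  "vscale3 c X = (\<lambda>A. vscale2 c (X A))"

definition lin_on :: "'a set \<Rightarrow> (real \<Rightarrow> 'a \<Rightarrow> 'a) \<Rightarrow> (real \<Rightarrow> 'b \<Rightarrow> 'b) \<Rightarrow> ('a::plus \<Rightarrow> 'b::plus) \<Rightarrow> bool" where
  "lin_on S scA scB f \<longleftrightarrow> (\<forall>x\<in>S. \<forall>y\<in>S. f (x + y) = f x + f y) \<and> (\<forall>c. \<forall>x\<in>S. f (scA c x) = scB c (f x))"

definition tanaka1_cond :: "(complex^'n \<Rightarrow> complex^'n \<Rightarrow> complex^'k) \<Rightarrow> (('n::finite,'k::finite) vf \<Rightarrow> ('n,'k) vf) \<Rightarrow> (('n,'k) vf \<Rightarrow> ('n,'k) vf) \<Rightarrow> bool" where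
  "tanaka1_cond H X1 X1' \<longleftrightarrow>
     (\<forall>Q\<in>g_m2 H. X1' Q \<in> g_m1 H) \<and> lin_on (g_m2 H) vscale vscale X1' \<and>
     (\<forall>A\<in>g_m1 H. \<forall>B\<in>g_m1 H. vf_bracket (X1 A) B - vf_bracket (X1 B) A = X1' (vf_bracket A B)) \<and>
     (\<forall>Q\<in>g_m2 H. \<forall>A\<in>g_m1 H. vf_bracket (X1' Q) A = vf_bracket (X1 A) Q)"

text \<open>First prolongation: linear maps g^{-1} -> g^0 (extended by 0 outside g^{-1}).\<close>
definition tg1 :: "(complex^'n \<Rightarrow> complex^'n \<Rightarrow> complex^'k) \<Rightarrow> (('n::finite,'k::finite) vf \<Rightarrow> ('n,'k) vf) set" where
  "tg1 H = {X1. (\<forall>A. A \<notin> g_m1 H \<longrightarrow> X1 A = 0) \<and> (\<forall>A\<in>g_m1 H. X1 A \<in> g_0 H) \<and>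
              lin_on (g_m1 H) vscale vscale X1 \<and> (\<exists>X1'. tanaka1_cond H X1 X1')}"

text \<open>The map X_1' associated to X_1 (it is unique), giving [X_1, X_{-2}] = X_1'(X_{-2}).\<close>
definition prime1 :: "(complex^'n \<Rightarrow> complex^'n \<Rightarrow> complex^'k) \<Rightarrow> (('n::finite,'k::finite) vf \<Rightarrow> ('n,'k) vf) \<Rightarrow> (('n,'k) vf \<Rightarrow> ('n,'k) vf)" where
  "prime1 H X1 = (SOME X1'. tanaka1_cond H X1 X1')"

text \<open>Second prolongation: linear maps g^{-1} -> tg^1 (extended by 0 outside g^{-1}).\<close>
definition tg2 :: "(complex^'n \<Rightarrow> complex^'n \<Rightarrow> complex^'k) \<Rightarrow> (('n::finite,'k::finite) vf \<Rightarrow> (('n,'k) vf \<Rightarrow> ('n,'k) vf)) set" where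
  "tg2 H = {X2. (\<forall>A. A \<notin> g_m1 H \<longrightarrow> X2 A = 0) \<and> (\<forall>A\<in>g_m1 H. X2 A \<in> tg1 H) \<and>
              lin_on (g_m1 H) vscale vscale2 X2 \<and>
              (\<exists>X2'. (\<forall>Q\<in>g_m2 H. X2' Q \<in> g_0 H) \<and> lin_on (g_m2 H) vscale vscale X2' \<and>
                 (\<forall>A\<in>g_m1 H. \<forall>B\<in>g_m1 H. X2 A B - X2 B A = X2' (vf_bracket A B)) \<and>
                 (\<forall>Q\<in>g_m2 H. \<forall>A\<in>g_m1 H. vf_bracket (X2' Q) A = prime1 H (X2 A) Q))}"

end

theory Submission
  imports Defs
begin

text \<open>Write A_p, Q_q and G(C,s) for the elements of g^-1, g^-2 and g^0. The map Phi sending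
  X = B(z,w) d/dz + r(w,w) d/dw in g^2 to (A, A') \<mapsto> [[X, A], A'] is real-linear from g^2 to the
  second prolongation; we show it is bijective, so the dimensions agree (no finiteness is needed).

  Injectivity: the antisymmetric part of [[X, A_p], A_p'] is B(z, Im H(p,p')) up to a factor, the
  vectors Im H(p,p') span R^k by non-degeneracy, and r is determined by B through
  Re H(B(z,u),z) = r(H(z,z),u), the H(z,z) spanning R^k as well.

  Surjectivity: an element X2 of the prolongation is determined by the map q \<mapsto> (D_q, t_q) with
  X2'(Q_q) = G(D_q, t_q), because the difference of two candidates is a totally symmetric trilinear
  map which is skew-adjoint for H, hence zero. Conversely B(z,w) = -D_(Re w) z - i D_(Im w) z,
  together with the r obtained from t, lies in g^2 and has an image with the same D, which is
  therefore X2. The one delicate condition, Im H(B(z, H(z,z)), z) = 0, follows from the Tanaka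
  identities evaluated at the pairs (x, x) and (i x, i x).\<close>

section \<open>Complex vectors, matrices and polarization\<close>

lemma scaleR_vec_complex: "(c::real) *\<^sub>R (v::complex^'n) = complex_of_real c *s v"
  by (vector scaleR_conv_of_real)

lemma scaleR_matrix_vector_mult:
  fixes M :: "'a::real_algebra_1^'n^'m"
  shows "(c *\<^sub>R M) *v x = c *\<^sub>R (M *v x)"
  by (simp add: vec_eq_iff matrix_vector_mult_def scaleR_sum_right)

lemma uminus_matrix_vector_mult: "(- M) *v (x::'a::ring_1^'n) = - (M *v x)"
  by (simp add: vec_eq_iff matrix_vector_mult_def sum_negf)

lemma frechet_derivative_affine:
  fixes L :: "'a::euclidean_space \<Rightarrow> 'b::real_normed_vector"
  assumes "linear L"
  shows "frechet_derivative (\<lambda>x. c + L x) (at p) = L"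
proof -
  have "bounded_linear L" using assms linear_conv_bounded_linear by blast
  then have "((\<lambda>x. c + L x) has_derivative L) (at p)"
    by (auto intro!: derivative_eq_intros bounded_linear_imp_has_derivative)
  then show ?thesis by (metis frechet_derivative_at)
qed

lemma sesquilinear_eq_0_if_diag_eq_0:
  fixes S :: "complex^'n \<Rightarrow> complex^'n \<Rightarrow> complex"
  assumes add_left: "\<And>a b c. S (a + b) c = S a c + S b c"
    and add_right: "\<And>a b c. S a (b + c) = S a b + S a c"
    and scale_left: "\<And>a b c. S (c *s a) b = c * S a b"
    and scale_right: "\<And>a b c. S a (c *s b) = cnj c * S a b"
    and diag: "\<And>a. S a a = 0"
  shows "S a b = 0"
proof -
  have "S (a + b) (a + b) = S a a + S a b + S b a + S b b" by (simp add: add_left add_right)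
  then have 1: "S a b + S b a = 0" using diag[of "a + b"] diag[of a] diag[of b] by simp
  have "S (a + \<i> *s b) (a + \<i> *s b) = S a a - \<i> * S a b + \<i> * S b a + S b b"
    by (simp add: add_left add_right scale_left scale_right) (simp add: algebra_simps)
  then have 2: "- \<i> * S a b + \<i> * S b a = 0" using diag[of "a + \<i> *s b"] diag[of a] diag[of b] by simp
  from 1 2 show ?thesis by (simp add: complex_eq_iff)
qed

lemma Im_diag_eq_0_polarization:
  fixes K :: "'a::ab_group_add \<Rightarrow> 'a \<Rightarrow> 'a \<Rightarrow> 'a \<Rightarrow> complex"
  assumes add1: "\<And>a a' b c d. K (a + a') b c d = K a b c d + K a' b c d"
    and add2: "\<And>a b b' c d. K a (b + b') c d = K a b c d + K a b' c d"
    and add3: "\<And>a b c c' d. K a b (c + c') d = K a b c d + K a b c' d"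
    and add4: "\<And>a b c d d'. K a b c (d + d') = K a b c d + K a b c d'"
    and diag: "\<And>x. Im (K x x x x) = 0"
  shows "Im (K y w x x + K y x w x + K y x x w + K w y x x + K x y w x + K x y x w
           + K w x y x + K x w y x + K x x y w + K w x x y + K x w x y + K x x w y) = 0"
proof -
  have m1: "K (a - a') b c d = K a b c d - K a' b c d" for a a' b c d
    using add1[of "a - a'" a'] by (simp add: algebra_simps)
  have m2: "K a (b - b') c d = K a b c d - K a b' c d" for a b b' c d
    using add2[of a "b - b'" b'] by (simp add: algebra_simps)
  have m3: "K a b (c - c') d = K a b c d - K a b c' d" for a b c c' d
    using add3[of a b "c - c'" c'] by (simp add: algebra_simps)
  have m4: "K a b c (d - d') = K a b c d - K a b c d'" for a b c d d'
    using add4[of a b c "d - d'" d'] by (simp add: algebra_simps)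
  note expand = add1 add2 add3 add4 m1 m2 m3 m4 plus_complex.sel minus_complex.sel
  have one_y: "Im (K y x x x + K x y x x + K x x y x + K x x x y) = 0" for x y
  proof -
    have sym: "Im (K y x x x + K x y x x + K x x y x + K x x x y)
           + Im (K x y y y + K y x y y + K y y x y + K y y y x) = 0" for x y
      using diag[of "x + y"] diag[of "x - y"] diag[of x] diag[of y] by (simp only: expand)
    from sym[where x=x and y=y] sym[where x="x + x" and y=y] show ?thesis by (simp only: expand)
  qed
  show ?thesis
    using one_y[where x="x + w" and y=y] one_y[where x="x - w" and y=y] one_y[where x=w and y=y]
    by (simp only: expand)
qed

definition Re_vec :: "complex^'k \<Rightarrow> real^'k" where "Re_vec v = (\<chi> j. Re (v $ j))"
definition Im_vec :: "complex^'k \<Rightarrow> real^'k" where "Im_vec v = (\<chi> j. Im (v $ j))"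

lemma Re_vec_nth [simp]: "Re_vec v $ j = Re (v $ j)" by (simp add: Re_vec_def)
lemma Im_vec_nth [simp]: "Im_vec v $ j = Im (v $ j)" by (simp add: Im_vec_def)
lemma rvec_nth [simp]: "rvec q $ j = complex_of_real (q $ j)" by (simp add: rvec_def)
lemma rmat_nth: "rmat s w $ j = (\<Sum>l\<in>UNIV. complex_of_real (s $ j $ l) * w $ l)"
  by (simp add: rmat_def)

lemma rvec_add [simp]: "rvec (a + b) = rvec a + rvec b" by (simp add: vec_eq_iff)
lemma rvec_scaleR [simp]: "rvec (c *\<^sub>R a) = complex_of_real c *s rvec a" by (simp add: vec_eq_iff)
lemma rvec_uminus [simp]: "rvec (- a) = - rvec a" by (simp add: vec_eq_iff)
lemma rvec_diff [simp]: "rvec (a - b) = rvec a - rvec b" by (simp add: vec_eq_iff)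
lemma rvec_zero [simp]: "rvec 0 = 0" by (simp add: vec_eq_iff)
lemma rvec_eq_iff: "rvec a = rvec b \<longleftrightarrow> a = b" by (simp add: vec_eq_iff)

lemma Re_vec_rvec [simp]: "Re_vec (rvec q) = q" by (simp add: vec_eq_iff)
lemma Im_vec_rvec [simp]: "Im_vec (rvec q) = 0" by (simp add: vec_eq_iff)
lemma Re_vec_add [simp]: "Re_vec (a + b) = Re_vec a + Re_vec b" by (simp add: vec_eq_iff)
lemma Im_vec_add [simp]: "Im_vec (a + b) = Im_vec a + Im_vec b" by (simp add: vec_eq_iff)
lemma Re_vec_uminus [simp]: "Re_vec (- a) = - Re_vec a" by (simp add: vec_eq_iff)
lemma Im_vec_uminus [simp]: "Im_vec (- a) = - Im_vec a" by (simp add: vec_eq_iff)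
lemma Re_vec_scale: "Re_vec (c *s w) = Re c *\<^sub>R Re_vec w - Im c *\<^sub>R Im_vec w" by (simp add: vec_eq_iff)
lemma Im_vec_scale: "Im_vec (c *s w) = Im c *\<^sub>R Re_vec w + Re c *\<^sub>R Im_vec w"
  by (simp add: vec_eq_iff algebra_simps)

lemma vec_complex_decomp: "u = rvec (Re_vec u) + \<i> *s rvec (Im_vec u)"
  by (simp add: vec_eq_iff complex_eq_iff)

lemma rmat_rvec: "rmat s (rvec q) = rvec (s *v q)"
  by (simp add: vec_eq_iff rmat_nth matrix_vector_mult_def)
lemma rmat_add: "rmat s (a + b) = rmat s a + rmat s b"
  by (simp add: vec_eq_iff rmat_nth distrib_left sum.distrib)
lemma rmat_scale: "rmat s (c *s a) = c *s rmat s a"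
  by (simp add: vec_eq_iff rmat_nth sum_distrib_left mult_ac)
lemma rmat_add_matrix: "rmat (s + s') a = rmat s a + rmat s' a"
  by (simp add: vec_eq_iff rmat_nth distrib_right sum.distrib)
lemma rmat_diff_matrix: "rmat (s - s') a = rmat s a - rmat s' a"
  by (simp add: vec_eq_iff rmat_nth left_diff_distrib sum_subtractf)
lemma rmat_scaleR_matrix: "rmat (c *\<^sub>R s) a = complex_of_real c *s rmat s a"
  by (simp add: vec_eq_iff rmat_nth sum_distrib_left mult_ac)
lemma Im_vec_rmat: "Im_vec (rmat s v) = s *v Im_vec v"
  by (simp add: vec_eq_iff rmat_nth matrix_vector_mult_def Im_sum)
lemma rmat_decomp: "rmat s u = rvec (s *v Re_vec u) + \<i> *s rvec (s *v Im_vec u)"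
  by (subst vec_complex_decomp[of u]) (simp add: rmat_add rmat_scale rmat_rvec)

lemma rmat_eq_iff: "rmat s = rmat s' \<longleftrightarrow> s = s'"
proof
  assume "rmat s = rmat s'"
  then have "rvec (s *v q) = rvec (s' *v q)" for q by (metis rmat_rvec)
  then show "s = s'" by (simp add: matrix_eq rvec_eq_iff)
qed simp

lemma cbilin_add_left: "cbilin B \<Longrightarrow> B (a + b) w = B a w + B b w"
  unfolding cbilin_def clin_def by blast
lemma cbilin_scale_left: "cbilin B \<Longrightarrow> B (c *s a) w = c *s B a w"
  unfolding cbilin_def clin_def by blast
lemma cbilin_add_right: "cbilin B \<Longrightarrow> B a (v + w) = B a v + B a w"
  unfolding cbilin_def clin_def by blast
lemma cbilin_scale_right: "cbilin B \<Longrightarrow> B a (c *s w) = c *s B a w"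
  unfolding cbilin_def clin_def by blast
lemma cbilin_zero_left: "cbilin B \<Longrightarrow> B 0 w = 0"
  using cbilin_add_left[of B 0 0 w] by simp
lemma cbilin_zero_right: "cbilin B \<Longrightarrow> B a 0 = 0"
  using cbilin_add_right[of B a 0 0] by simp
lemma cbilin_uminus_left: "cbilin B \<Longrightarrow> B (- a) w = - B a w"
  using cbilin_add_left[of B a "-a" w] cbilin_zero_left[of B w]
  by (simp add: eq_neg_iff_add_eq_0 add.commute)
lemma cbilin_uminus_right: "cbilin B \<Longrightarrow> B a (- w) = - B a w"
  using cbilin_add_right[of B a w "-w"] cbilin_zero_right[of B a]
  by (simp add: eq_neg_iff_add_eq_0 add.commute)
lemma cbilin_diff_left: "cbilin B \<Longrightarrow> B (a - b) w = B a w - B b w"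
  using cbilin_add_left[of B a "-b" w] cbilin_uminus_left[of B b w] by simp
lemma cbilin_diff_right: "cbilin B \<Longrightarrow> B a (v - w) = B a v - B a w"
  using cbilin_add_right[of B a v "-w"] cbilin_uminus_right[of B a w] by simp
lemma cbilin_scaleR_left: "cbilin B \<Longrightarrow> B (t *\<^sub>R a) w = t *\<^sub>R B a w"
  by (simp add: scaleR_vec_complex cbilin_scale_left)
lemma cbilin_scaleR_right: "cbilin B \<Longrightarrow> B a (t *\<^sub>R w) = t *\<^sub>R B a w"
  by (simp add: scaleR_vec_complex cbilin_scale_right)

lemmas cbilin_simps = cbilin_add_left cbilin_scale_left cbilin_add_right cbilin_scale_right
  cbilin_zero_left cbilin_zero_right cbilin_uminus_left cbilin_uminus_right
  cbilin_diff_left cbilin_diff_right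

lemma clin_imp_linear: "clin f \<Longrightarrow> Vector_Spaces.linear (*s) (*s) (f :: complex^'a \<Rightarrow> complex^'b)"
  by unfold_locales (auto simp: clin_def vec_eq_iff algebra_simps)

lemma matrix_works_clin: "clin f \<Longrightarrow> matrix f *v z = f z"
  by (rule matrix_works[OF clin_imp_linear])

lemma matrix_works_additive_homogeneous:
  assumes "\<And>a b. f (a + b) = f a + f b" "\<And>c a. f (c *\<^sub>R a) = c *\<^sub>R f a"
  shows "matrix f *v (z::real^'a) = (f z :: real^'b)"
proof (rule matrix_works)
  show "Vector_Spaces.linear (*s) (*s) f"
    by unfold_locales (auto simp: assms scalar_mult_eq_scaleR vec_eq_iff algebra_simps)
qed

lemma scale_Re_Im_parts:
  "(Re c *\<^sub>R P - Im c *\<^sub>R Q) + \<i> *s (Im c *\<^sub>R P + Re c *\<^sub>R Q) = c *s (P + \<i> *s (Q::complex^'n))"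
  by (simp add: vec_eq_iff scaleR_vec_complex complex_eq_iff algebra_simps)

text \<open>The complex-bilinear maps with B_of_D Dm z (rvec q) = - Dm q *v z and
  r_of_t tm u (rvec q) = -1/2 rmat (tm q) u.\<close>

definition B_of_D :: "(real^'k \<Rightarrow> complex^'n^'n) \<Rightarrow> complex^'n \<Rightarrow> complex^'k \<Rightarrow> complex^'n" where
  "B_of_D Dm z w = - (Dm (Re_vec w) *v z + \<i> *s (Dm (Im_vec w) *v z))"

definition r_of_t :: "(real^'k \<Rightarrow> real^'k^'k) \<Rightarrow> complex^'k \<Rightarrow> complex^'k \<Rightarrow> complex^'k" where
  "r_of_t tm u v = (- 1/2) *s (rmat (tm (Re_vec v)) u + \<i> *s rmat (tm (Im_vec v)) u)"

lemma cbilin_B_of_D: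
  assumes D_add: "\<And>a b. Dm (a + b) = Dm a + Dm b" and D_scaleR: "\<And>c a. Dm (c *\<^sub>R a) = c *\<^sub>R Dm a"
  shows "cbilin (B_of_D Dm)"
proof -
  have D_diff: "Dm (a - b) = Dm a - Dm b" for a b using D_add[of "a - b" b] by simp
  have "clin (\<lambda>z. B_of_D Dm z w)" for w
    unfolding clin_def B_of_D_def
    by (simp add: matrix_vector_right_distrib vector_scalar_commute vec_eq_iff algebra_simps)
  moreover have "clin (B_of_D Dm z)" for z
    unfolding clin_def
  proof (intro conjI allI)
    fix x y show "B_of_D Dm z (x + y) = B_of_D Dm z x + B_of_D Dm z y"
      by (simp add: B_of_D_def D_add matrix_vector_mult_add_rdistrib vec_eq_iff algebra_simps)
  next
    fix c x
    have "B_of_D Dm z (c *s x) = - ((Re c *\<^sub>R (Dm (Re_vec x) *v z) - Im c *\<^sub>R (Dm (Im_vec x) *v z))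
        + \<i> *s (Im c *\<^sub>R (Dm (Re_vec x) *v z) + Re c *\<^sub>R (Dm (Im_vec x) *v z)))"
      by (simp add: B_of_D_def Re_vec_scale Im_vec_scale D_diff D_add D_scaleR
          matrix_vector_mult_diff_rdistrib matrix_vector_mult_add_rdistrib scaleR_matrix_vector_mult)
    also have "\<dots> = c *s B_of_D Dm z x"
      by (simp add: B_of_D_def vec_eq_iff scaleR_vec_complex complex_eq_iff algebra_simps)
    finally show "B_of_D Dm z (c *s x) = c *s B_of_D Dm z x" .
  qed
  ultimately show ?thesis unfolding cbilin_def by blast
qed

lemma cbilin_r_of_t:
  assumes t_add: "\<And>a b. tm (a + b) = tm a + tm b" and t_scaleR: "\<And>c a. tm (c *\<^sub>R a) = c *\<^sub>R tm a"
  shows "cbilin (r_of_t tm)"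
proof -
  have t_diff: "tm (a - b) = tm a - tm b" for a b using t_add[of "a - b" b] by simp
  have "clin (\<lambda>u. r_of_t tm u v)" for v
    unfolding clin_def r_of_t_def by (simp add: rmat_add rmat_scale vec_eq_iff algebra_simps)
  moreover have "clin (r_of_t tm u)" for u
    unfolding clin_def
  proof (intro conjI allI)
    fix x y show "r_of_t tm u (x + y) = r_of_t tm u x + r_of_t tm u y"
      by (simp add: r_of_t_def t_add rmat_add_matrix vec_eq_iff algebra_simps)
  next
    fix c x
    have "r_of_t tm u (c *s x) = (- 1/2) *s ((Re c *\<^sub>R rmat (tm (Re_vec x)) u - Im c *\<^sub>R rmat (tm (Im_vec x)) u)
        + \<i> *s (Im c *\<^sub>R rmat (tm (Re_vec x)) u + Re c *\<^sub>R rmat (tm (Im_vec x)) u))"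
      by (simp add: r_of_t_def Re_vec_scale Im_vec_scale t_diff t_add t_scaleR
          rmat_diff_matrix rmat_add_matrix rmat_scaleR_matrix scaleR_vec_complex)
    also have "\<dots> = c *s r_of_t tm u x"
      unfolding r_of_t_def scale_Re_Im_parts by (simp add: vector_smult_assoc mult.commute)
    finally show "r_of_t tm u (c *s x) = c *s r_of_t tm u x" .
  qed
  ultimately show ?thesis unfolding cbilin_def by blast
qed

lemma r_of_t_sym:
  assumes t_sym: "\<And>a b. tm a *v b = tm b *v a"
  shows "r_of_t tm u v = r_of_t tm v u"
proof -
  have expand: "r_of_t tm u v = (- 1/2) *s (rvec (tm (Re_vec v) *v Re_vec u) - rvec (tm (Im_vec v) *v Im_vec u)
       + \<i> *s (rvec (tm (Re_vec v) *v Im_vec u) + rvec (tm (Im_vec v) *v Re_vec u)))" for u v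
    unfolding r_of_t_def rmat_decomp by (simp add: vec_eq_iff algebra_simps)
  show ?thesis unfolding expand
    using t_sym[of "Re_vec u" "Re_vec v"] t_sym[of "Im_vec u" "Im_vec v"]
      t_sym[of "Re_vec u" "Im_vec v"] t_sym[of "Im_vec u" "Re_vec v"]
    by (simp add: vec_eq_iff algebra_simps)
qed

section \<open>Spaces of vector fields\<close>

(* The library version dim_image_eq requires a finite-dimensional domain; the space of
   vector fields is not. *)

lemma (in vector_space_pair) dim_image_eq_of_inj_on_span:
  assumes lf: "Vector_Spaces.linear s1 s2 f" and inj: "inj_on f (vs1.span S)"
  shows "vs2.dim (f ` S) = vs1.dim S"
proof -
  obtain B where B: "B \<subseteq> S" "vs1.independent B" "S \<subseteq> vs1.span B" "card B = vs1.dim S"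
    using vs1.basis_exists by blast
  have span_B: "vs1.span B = vs1.span S"
    using B vs1.span_mono vs1.span_minimal vs1.subspace_span by (metis subset_antisym)
  have inj_B: "inj_on f (vs1.span B)" using inj span_B by simp
  have "vs2.independent (f ` B)"
    using linear_independent_injective_image[OF lf B(2) inj_B] .
  moreover have "vs2.span (f ` B) = vs2.span (f ` S)"
    by (simp add: linear_span_image[OF lf] span_B)
  ultimately have "vs2.dim (f ` S) = card (f ` B)" by (simp add: vs2.dim_eq_card)
  also have "\<dots> = card B"
    using card_image inj_on_subset[OF inj_B vs1.span_superset] by blast
  finally show ?thesis using B(4) by simp
qed

lemma vscale_zero [simp]: "vscale c 0 = 0" by (simp add: vscale_def fun_eq_iff zero_fun_def)

lemma vector_space_vscale: "vector_space (vscale :: real \<Rightarrow> ('n::finite,'k::finite) vf \<Rightarrow> _)"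
  by unfold_locales (auto simp: vscale_def fun_eq_iff scaleR_add_right scaleR_add_left)

lemma vector_space_vscale3: "vector_space (vscale3 :: real \<Rightarrow> _ \<Rightarrow> (('n::finite,'k::finite) vf \<Rightarrow> _))"
  by unfold_locales (auto simp: vscale3_def vscale2_def vscale_def fun_eq_iff scaleR_add_right scaleR_add_left)

definition vf_m2 :: "real^'k \<Rightarrow> ('n::finite,'k::finite) vf" where
  "vf_m2 q = (\<lambda>(z, w). (0, rvec q))"

definition vf_0 :: "complex^'n^'n \<Rightarrow> real^'k^'k \<Rightarrow> ('n::finite,'k::finite) vf" where
  "vf_0 C s = (\<lambda>(z, w). (C *v z, rmat s w))"

definition vf_2 :: "(complex^'n \<Rightarrow> complex^'k \<Rightarrow> complex^'n) \<Rightarrow> (complex^'k \<Rightarrow> complex^'k \<Rightarrow> complex^'k)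
    \<Rightarrow> ('n::finite,'k::finite) vf" where
  "vf_2 B r = (\<lambda>(z, w). (B z w, r w w))"

lemma frechet_derivative_vf_m2: "frechet_derivative (vf_m2 q) (at x) = (\<lambda>x. 0)"
proof -
  have affine: "vf_m2 q = (\<lambda>x. (0, rvec q) + (\<lambda>x. 0) x)" by (auto simp: vf_m2_def)
  show ?thesis unfolding affine by (rule frechet_derivative_affine) (rule linearI; simp)
qed

lemma frechet_derivative_vf_0: "frechet_derivative (vf_0 C s) (at x) = (\<lambda>x. (C *v fst x, rmat s (snd x)))"
proof -
  have affine: "vf_0 C s = (\<lambda>x. 0 + (\<lambda>x. (C *v fst x, rmat s (snd x))) x)" by (auto simp: vf_0_def)
  have "linear (\<lambda>x. (C *v fst x, rmat s (snd x)))"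
    by (rule linearI)
      (auto simp: matrix_vector_right_distrib rmat_add scaleR_vec_complex vector_scalar_commute rmat_scale)
  then show ?thesis unfolding affine by (rule frechet_derivative_affine)
qed

lemma bracket_vf_0_vf_m2: "vf_bracket (vf_0 C s) (vf_m2 q) = vf_m2 (- (s *v q))"
  unfolding vf_bracket_def frechet_derivative_vf_m2 frechet_derivative_vf_0
  by (auto simp: vf_m2_def vf_0_def fun_eq_iff rmat_rvec)

lemma vf_m2_eq_iff: "vf_m2 q = vf_m2 q' \<longleftrightarrow> q = q'"
  by (metis vf_m2_def case_prod_conv snd_conv rvec_eq_iff)

lemma vf_0_eq_iff: "vf_0 C s = vf_0 C' s' \<longleftrightarrow> C = C' \<and> s = s'"
proof
  assume eq: "vf_0 C s = vf_0 C' s'"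
  have "C *v z = C' *v z" for z using fun_cong[OF eq, of "(z, 0)"] by (simp add: vf_0_def)
  moreover have "rmat s w = rmat s' w" for w using fun_cong[OF eq, of "(0, w)"] by (simp add: vf_0_def)
  ultimately have "C = C'" "rmat s = rmat s'" by (auto simp: matrix_eq)
  then show "C = C' \<and> s = s'" by (simp add: rmat_eq_iff)
qed simp

lemma vf_m2_add: "vf_m2 q + vf_m2 q' = vf_m2 (q + q')"
  by (auto simp: vf_m2_def fun_eq_iff)
lemma vscale_vf_m2: "vscale c (vf_m2 q) = vf_m2 (c *\<^sub>R q)"
  by (auto simp: vf_m2_def fun_eq_iff vscale_def scaleR_vec_complex vec_eq_iff)
lemma vf_0_add: "vf_0 C s + vf_0 C' s' = vf_0 (C + C') (s + s')"
  by (auto simp: vf_0_def fun_eq_iff matrix_vector_mult_add_rdistrib rmat_add_matrix)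
lemma vf_0_diff: "vf_0 C s - vf_0 C' s' = vf_0 (C - C') (s - s')"
  by (auto simp: vf_0_def fun_eq_iff matrix_vector_mult_diff_rdistrib rmat_diff_matrix)
lemma vscale_vf_0: "vscale c (vf_0 C s) = vf_0 (c *\<^sub>R C) (c *\<^sub>R s)"
  by (auto simp: vf_0_def fun_eq_iff vscale_def rmat_scaleR_matrix scaleR_vec_complex
      scaleR_matrix_vector_mult)

lemma vf_2_add: "vf_2 B1 r1 + vf_2 B2 r2 = vf_2 (\<lambda>z w. B1 z w + B2 z w) (\<lambda>u v. r1 u v + r2 u v)"
  by (simp add: vf_2_def fun_eq_iff)
lemma vscale_vf_2: "vscale c (vf_2 B r) = vf_2 (\<lambda>z w. c *\<^sub>R B z w) (\<lambda>u v. c *\<^sub>R r u v)"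
  by (simp add: vf_2_def fun_eq_iff vscale_def)
lemma vf_2_zero: "vf_2 (\<lambda>z w. 0) (\<lambda>u v. 0) = 0"
  by (simp add: vf_2_def fun_eq_iff zero_prod_def)

definition z_coeff :: "('n::finite,'k::finite) vf \<Rightarrow> complex^'n \<Rightarrow> complex^'k \<Rightarrow> complex^'n" where
  "z_coeff X z w = fst (X (z, w))"

lemma z_coeff_vf_2 [simp]: "z_coeff (vf_2 B r) = B" by (simp add: z_coeff_def vf_2_def fun_eq_iff)

section \<open>Non-degenerate Hermitian forms and the graded pieces\<close>

locale nondeg_herm =
  fixes H :: "complex^'n::finite \<Rightarrow> complex^'n \<Rightarrow> complex^'k::finite"
  assumes hermitian: "hermitian_form H" and nondeg: "nondegenerate H"
begin

lemma H_add_left: "H (a + b) c = H a c + H b c"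
  using hermitian unfolding hermitian_form_def clin_def by blast
lemma H_scale_left: "H (c *s a) b = c *s H a b"
  using hermitian unfolding hermitian_form_def clin_def by blast
lemma H_add_right: "H a (b + c) = H a b + H a c"
  using hermitian unfolding hermitian_form_def clin_def by blast
lemma H_scale_right: "H a (c *s b) = cnj c *s H a b"
  using hermitian unfolding hermitian_form_def clin_def by blast
lemma H_swap: "H b a $ j = cnj (H a b $ j)"
proof -
  have "H b a = (\<chi> j. cnj (H a b $ j))" using hermitian unfolding hermitian_form_def by blast
  then show ?thesis by simp
qed
lemma H_zero_left [simp]: "H 0 b = 0"
  using H_add_left[of 0 0 b] by simp
lemma H_zero_right [simp]: "H a 0 = 0"
  using H_add_right[of a 0 0] by simp
lemma H_uminus_left: "H (- a) b = - H a b"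
  using H_add_left[of a "-a" b] by (simp add: eq_neg_iff_add_eq_0 add.commute)
lemma H_uminus_right: "H a (- b) = - H a b"
  using H_add_right[of a b "-b"] by (simp add: eq_neg_iff_add_eq_0 add.commute)
lemma H_diff_left: "H (a - b) c = H a c - H b c"
  using H_add_left[of a "-b" c] H_uminus_left[of b c] by simp
lemma H_diff_right: "H a (b - c) = H a b - H a c"
  using H_add_right[of a b "-c"] H_uminus_right[of a c] by simp

lemmas H_simps = H_add_left H_scale_left H_add_right H_scale_right
  H_uminus_left H_uminus_right H_diff_left H_diff_right

lemma H_scaleR_left: "H (c *\<^sub>R a) b = c *\<^sub>R H a b" by (simp add: scaleR_vec_complex H_scale_left)
lemma H_scaleR_right: "H a (c *\<^sub>R b) = c *\<^sub>R H a b" by (simp add: scaleR_vec_complex H_scale_right)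

lemma Im_H_diag: "Im (H z z $ j) = 0"
  using H_swap[of z z j] by (simp add: complex_eq_iff)

lemma H_diag_real: "H z z = rvec (Re_vec (H z z))"
  by (simp add: vec_eq_iff complex_eq_iff Im_H_diag)

lemma Im_vec_H_diag: "Im_vec (H z z) = 0"
  by (simp add: vec_eq_iff Im_H_diag)

definition ImH :: "complex^'n \<Rightarrow> complex^'n \<Rightarrow> real^'k" where
  "ImH p p' = Im_vec (H p p')"

lemma ImH_swap: "ImH a b = - ImH b a"
  by (simp add: ImH_def vec_eq_iff H_swap[of a b])
lemma ImH_add_left: "ImH (a + b) c = ImH a c + ImH b c" by (simp add: ImH_def H_add_left)
lemma ImH_add_right: "ImH a (b + c) = ImH a b + ImH a c" by (simp add: ImH_def H_add_right)
lemma ImH_scaleR_left: "ImH (t *\<^sub>R a) c = t *\<^sub>R ImH a c" by (simp add: ImH_def H_scaleR_left vec_eq_iff)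
lemma ImH_scaleR_right: "ImH a (t *\<^sub>R c) = t *\<^sub>R ImH a c" by (simp add: ImH_def H_scaleR_right vec_eq_iff)

lemma H_minus_H_swap: "H a b - H b a = (2 * \<i>) *s rvec (ImH a b)"
  by (simp add: vec_eq_iff ImH_def H_swap[of b a] complex_eq_iff)

lemma ImH_polarization:
  "ImH p p' = (1/2) *\<^sub>R (Re_vec (H (p + \<i> *s p') (p + \<i> *s p')) - Re_vec (H p p) - Re_vec (H p' p'))"
proof -
  have "Re (H (p + \<i> *s p') (p + \<i> *s p') $ j) = Re (H p p $ j) + Re (H p' p' $ j) + 2 * Im (H p p' $ j)" for j
    using H_swap[of p p' j] by (simp add: H_simps)
  then show ?thesis by (simp add: vec_eq_iff ImH_def)
qed

lemma span_range_ImH: "span (range (\<lambda>(p, p'). ImH p p')) = UNIV"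
proof (rule ccontr)
  let ?S = "range (\<lambda>(p, p'). ImH p p')"
  assume "span ?S \<noteq> UNIV"
  then have proper: "span ?S \<subset> span UNIV" by (simp add: top.not_eq_extremum)
  obtain x :: "real^'k" where x: "x \<noteq> 0" "\<And>y. y \<in> span ?S \<Longrightarrow> orthogonal x y"
    using orthogonal_to_subspace_exists_gen[OF proper] by metis
  have orth: "(\<Sum>j\<in>UNIV. x $ j * Im (H p p' $ j)) = 0" for p p'
  proof -
    have "ImH p p' \<in> span ?S" by (rule span_base) auto
    from x(2)[OF this] show ?thesis by (simp add: orthogonal_def inner_vec_def ImH_def)
  qed
  have "(\<Sum>j\<in>UNIV. complex_of_real (x $ j) * (H p p' $ j)) = 0" for p p'
  proof -
    have "(\<Sum>j\<in>UNIV. x $ j * Re (H p p' $ j)) = 0"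
      using orth[of "\<i> *s p" p'] by (simp add: H_scale_left)
    then show ?thesis using orth[of p p'] by (simp add: complex_eq_iff Re_sum Im_sum)
  qed
  then have "x = 0" using nondeg unfolding nondegenerate_def by blast
  with x show False by simp
qed

lemma additive_eq_0_if_vanishes_on_ImH:
  fixes L :: "real^'k \<Rightarrow> 'v::real_vector"
  assumes "\<And>a b. L (a + b) = L a + L b" "\<And>c a. L (c *\<^sub>R a) = c *\<^sub>R L a"
    and "\<And>p p'. L (ImH p p') = 0"
  shows "L q = 0"
proof -
  have lin: "linear L" by (rule linearI) (use assms in auto)
  have "q \<in> span (range (\<lambda>(p, p'). ImH p p'))" by (simp add: span_range_ImH)
  then show ?thesis
    by (rule linear_eq_0_on_span[OF lin, rotated]) (use assms(3) in auto)
qed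

lemma additive_eq_0_if_vanishes_on_H_diag:
  fixes L :: "real^'k \<Rightarrow> 'v::real_vector"
  assumes add: "\<And>a b. L (a + b) = L a + L b" and scaleR: "\<And>c a. L (c *\<^sub>R a) = c *\<^sub>R L a"
    and diag: "\<And>z. L (Re_vec (H z z)) = 0"
  shows "L q = 0"
proof (rule additive_eq_0_if_vanishes_on_ImH[OF add scaleR])
  have diff: "L (x - y) = L x - L y" for x y using add[of "x - y" y] by simp
  show "L (ImH p p') = 0" for p p' unfolding ImH_polarization scaleR diff diag by simp
qed

text \<open>A tensor symmetric in all three arguments and complex-linear in the last is complex-linear
  in the first; skew-adjointness for H makes it antilinear there, hence it vanishes.\<close>

lemma symmetric_skew_adjoint_trilinear_eq_0:
  fixes D :: "complex^'n \<Rightarrow> complex^'n \<Rightarrow> complex^'n \<Rightarrow> complex^'n"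
  assumes sym12: "\<And>a b c. D a b c = D b a c" and sym23: "\<And>a b c. D a b c = D a c b"
    and scale3: "\<And>a b c x. D a b (x *s c) = x *s D a b c"
    and skew: "\<And>a b c d. H (D a b c) d + H c (D a b d) = 0"
  shows "D a b c = 0"
proof -
  have scale1: "D (\<i> *s a) b c = \<i> *s D a b c" for a b c
  proof -
    have "D (\<i> *s a) b c = D b (\<i> *s a) c" by (rule sym12)
    also have "\<dots> = D b c (\<i> *s a)" by (rule sym23)
    also have "\<dots> = \<i> *s D b c a" by (rule scale3)
    also have "D b c a = D a b c" using sym12[of b a c] sym23[of b a c] by simp
    finally show ?thesis .
  qed
  have "H (D a b c) d $ j = 0" for d j
  proof -
    have skew_j: "H (D x b c) d $ j = - cnj (H (D x b d) c $ j)" for x c d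
    proof -
      have "H (D x b c) d $ j + H c (D x b d) $ j = 0"
        using arg_cong[OF skew[of x b c d], of "\<lambda>v. v $ j"] by simp
      then show ?thesis using H_swap[of "D x b d" c j] by (simp add: eq_neg_iff_add_eq_0)
    qed
    have "\<i> * H (D a b c) d $ j = - cnj (\<i> * H (D a b d) c $ j)"
      using skew_j[of "\<i> *s a" c d] by (simp add: scale1 H_scale_left)
    also have "\<dots> = - \<i> * H (D a b c) d $ j" using skew_j[of a c d] by simp
    finally show ?thesis by simp
  qed
  then have "\<forall>d. H (D a b c) d = 0" by (simp add: vec_eq_iff)
  then show ?thesis using nondeg unfolding nondegenerate_def by blast
qed

definition vf_m1 :: "complex^'n \<Rightarrow> ('n,'k) vf" where
  "vf_m1 p = (\<lambda>(z, w). (p, (2 * \<i>) *s H z p))"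

definition is_g0 :: "complex^'n^'n \<Rightarrow> real^'k^'k \<Rightarrow> bool" where
  "is_g0 C s \<longleftrightarrow> (\<forall>z. (2::real) *\<^sub>R (\<chi> j. Re (H (C *v z) z $ j)) = s *v (\<chi> j. Re (H z z $ j)))"

definition is_g2 :: "(complex^'n \<Rightarrow> complex^'k \<Rightarrow> complex^'n) \<Rightarrow> (complex^'k \<Rightarrow> complex^'k \<Rightarrow> complex^'k)
    \<Rightarrow> bool" where
  "is_g2 B r \<longleftrightarrow> cbilin B \<and> cbilin r \<and> (\<forall>u v. r u v = r v u) \<and>
     (\<forall>z u. (\<chi> j. complex_of_real (Re (H (B z (rvec u)) z $ j))) = r (H z z) (rvec u)) \<and>
     (\<forall>z j. Im (H (B z (H z z)) z $ j) = 0)"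

lemma g_m1_eq: "g_m1 H = range vf_m1" unfolding g_m1_def vf_m1_def by auto
lemma g_m2_eq: "g_m2 H = range vf_m2" unfolding g_m2_def vf_m2_def by auto
lemma g_0_eq: "g_0 H = {vf_0 C s | C s. is_g0 C s}" unfolding g_0_def vf_0_def is_g0_def by blast

lemma g_2_eq: "g_2 H = {vf_2 B r | B r. is_g2 B r}" unfolding g_2_def vf_2_def is_g2_def by blast

lemma vf_m1_in_g_m1 [simp]: "vf_m1 p \<in> g_m1 H" by (simp add: g_m1_eq)
lemma vf_m2_in_g_m2 [simp]: "vf_m2 q \<in> g_m2 H" by (simp add: g_m2_eq)

lemma lin_on_g_m2_coeffs:
  assumes lin: "lin_on (g_m2 H) vscale vscale X'" and coeffs: "\<And>q. X' (vf_m2 q) = vf_0 (D q) (t q)"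
  shows "D (a + b) = D a + D b \<and> t (a + b) = t a + t b" and "D (c *\<^sub>R a) = c *\<^sub>R D a \<and> t (c *\<^sub>R a) = c *\<^sub>R t a"
proof -
  have "X' (vf_m2 a + vf_m2 b) = X' (vf_m2 a) + X' (vf_m2 b)"
    using lin unfolding lin_on_def by simp
  then show "D (a + b) = D a + D b \<and> t (a + b) = t a + t b"
    by (simp add: vf_m2_add coeffs vf_0_add vf_0_eq_iff)
  have "X' (vscale c (vf_m2 a)) = vscale c (X' (vf_m2 a))"
    using lin unfolding lin_on_def by simp
  then show "D (c *\<^sub>R a) = c *\<^sub>R D a \<and> t (c *\<^sub>R a) = c *\<^sub>R t a"
    by (simp add: vscale_vf_m2 coeffs vscale_vf_0 vf_0_eq_iff)
qed

lemma is_g0_diag: "is_g0 C s \<Longrightarrow> s *v Re_vec (H z z) = (2::real) *\<^sub>R Re_vec (H (C *v z) z)"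
  unfolding is_g0_def by (metis Re_vec_def)

lemma is_g0_polarized:
  assumes "is_g0 C s"
  shows "H (C *v z) z' + H z (C *v z') = rmat s (H z z')"
proof -
  have "(H (C *v z) z' + H z (C *v z') - rmat s (H z z')) $ j = 0" for j
  proof (rule sesquilinear_eq_0_if_diag_eq_0
      [where S="\<lambda>z z'. (H (C *v z) z' + H z (C *v z') - rmat s (H z z')) $ j"])
    fix a
    have "rmat s (H a a) $ j = complex_of_real ((s *v Re_vec (H a a)) $ j)"
      by (subst H_diag_real) (simp add: rmat_rvec)
    then show "(H (C *v a) a + H a (C *v a) - rmat s (H a a)) $ j = 0"
      using is_g0_diag[OF assms, of a] H_swap[of "C *v a" a j] by (simp add: complex_eq_iff)
  qed (simp_all add: H_simps matrix_vector_right_distrib vector_scalar_commute rmat_add rmat_scale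
      algebra_simps)
  then show ?thesis by (simp add: vec_eq_iff)
qed

lemma frechet_derivative_vf_m1:
  "frechet_derivative (vf_m1 p) (at x) = (\<lambda>x. (0, (2 * \<i>) *s H (fst x) p))"
proof -
  have affine: "vf_m1 p = (\<lambda>x. (p, 0) + (\<lambda>x. (0, (2 * \<i>) *s H (fst x) p)) x)"
    by (auto simp: vf_m1_def)
  have "linear (\<lambda>x::('n,'k) pt. (0::complex^'n, (2 * \<i>) *s H (fst x) p))"
    by (rule linearI) (simp_all add: H_add_left scaleR_vec_complex H_scale_left vec_eq_iff algebra_simps)
  then show ?thesis unfolding affine by (rule frechet_derivative_affine)
qed

lemma bracket_vf_0_vf_m1:
  assumes "is_g0 C s"
  shows "vf_bracket (vf_0 C s) (vf_m1 p) = vf_m1 (- (C *v p))"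
proof -
  have "(2 * \<i>) *s H (C *v z) p - rmat s ((2 * \<i>) *s H z p) = (2 * \<i>) *s H z (- (C *v p))" for z
  proof -
    have eq: "H (C *v z) p - rmat s (H z p) = - H z (C *v p)"
      by (simp add: is_g0_polarized[OF assms, of z p, symmetric])
    show ?thesis by (simp add: rmat_scale H_uminus_right eq[symmetric] vector_ssub_ldistrib)
  qed
  then show ?thesis
    unfolding vf_bracket_def frechet_derivative_vf_m1 frechet_derivative_vf_0
    by (auto simp: vf_m1_def vf_0_def fun_eq_iff)
qed

lemma bracket_vf_m1_vf_m1: "vf_bracket (vf_m1 p) (vf_m1 p') = vf_m2 (-4 *\<^sub>R ImH p p')"
proof -
  have "(2 * \<i>) * (H p p' $ j - H p' p $ j) = - 4 * complex_of_real (Im (H p p' $ j))" for j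
    using H_swap[of p' p j] by (simp add: complex_eq_iff)
  then show ?thesis
    unfolding vf_bracket_def frechet_derivative_vf_m1
    by (auto simp: vf_m1_def vf_m2_def ImH_def vec_eq_iff algebra_simps fun_eq_iff)
qed

lemma vf_m1_origin: "vf_m1 p (0, 0) = (p, 0)" by (simp add: vf_m1_def)
lemma vf_m1_eq_iff: "vf_m1 p = vf_m1 p' \<longleftrightarrow> p = p'" by (metis vf_m1_origin fst_conv)

lemma vf_m1_add: "vf_m1 p + vf_m1 p' = vf_m1 (p + p')"
  by (auto simp: vf_m1_def fun_eq_iff H_add_right vector_add_ldistrib)
lemma vf_m1_diff: "vf_m1 p - vf_m1 p' = vf_m1 (p - p')"
  by (auto simp: vf_m1_def fun_eq_iff H_diff_right vector_ssub_ldistrib)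
lemma vscale_vf_m1: "vscale c (vf_m1 p) = vf_m1 (c *\<^sub>R p)"
  by (auto simp: vf_m1_def fun_eq_iff vscale_def H_scale_right scaleR_vec_complex vec_eq_iff)

lemma choose_g_0_coeffs:
  assumes "\<And>x. f x \<in> g_0 H"
  obtains C s where "\<And>x. f x = vf_0 (C x) (s x)" "\<And>x. is_g0 (C x) (s x)"
proof -
  have "\<forall>x. \<exists>Cs. f x = vf_0 (fst Cs) (snd Cs) \<and> is_g0 (fst Cs) (snd Cs)"
    using assms by (force simp: g_0_eq)
  then obtain F where "\<And>x. f x = vf_0 (fst (F x)) (snd (F x)) \<and> is_g0 (fst (F x)) (snd (F x))"
    by metis
  then show ?thesis by (intro that[of "\<lambda>x. fst (F x)" "\<lambda>x. snd (F x)"]) simp_all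
qed

lemma prime1_in_tg1:
  assumes "X1 \<in> tg1 H"
  shows "tanaka1_cond H X1 (prime1 H X1)"
proof -
  from assms have "\<exists>X1'. tanaka1_cond H X1 X1'" by (simp add: tg1_def)
  then show ?thesis unfolding prime1_def by (rule someI_ex)
qed

lemma tg1_coeff_identities:
  assumes "X1 \<in> tg1 H"
    and coeffs: "\<And>p. X1 (vf_m1 p) = vf_0 (C p) (s p)" "\<And>p. is_g0 (C p) (s p)"
    and prime: "\<And>q. prime1 H X1 (vf_m2 q) = vf_m1 (P q)"
  shows "C p'' *v p' - C p' *v p'' = P (-4 *\<^sub>R ImH p' p'')" and "s p' *v q = 4 *\<^sub>R ImH (P q) p'"
proof -
  have cond: "tanaka1_cond H X1 (prime1 H X1)" using assms(1) by (rule prime1_in_tg1)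
  then have "vf_bracket (X1 (vf_m1 p')) (vf_m1 p'') - vf_bracket (X1 (vf_m1 p'')) (vf_m1 p')
      = prime1 H X1 (vf_bracket (vf_m1 p') (vf_m1 p''))"
    unfolding tanaka1_cond_def by simp
  then show "C p'' *v p' - C p' *v p'' = P (-4 *\<^sub>R ImH p' p'')"
    by (simp add: coeffs bracket_vf_0_vf_m1 vf_m1_diff bracket_vf_m1_vf_m1 prime vf_m1_eq_iff)
  from cond have "vf_bracket (prime1 H X1 (vf_m2 q)) (vf_m1 p') = vf_bracket (X1 (vf_m1 p')) (vf_m2 q)"
    unfolding tanaka1_cond_def by simp
  then have "-4 *\<^sub>R ImH (P q) p' = - (s p' *v q)"
    by (simp add: prime coeffs bracket_vf_m1_vf_m1 bracket_vf_0_vf_m2 vf_m2_eq_iff)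
  then show "s p' *v q = 4 *\<^sub>R ImH (P q) p'" by (simp add: algebra_simps)
qed

lemma tanaka1_cond_unique:
  assumes P: "tanaka1_cond H X1 P" and P': "tanaka1_cond H X1 P'"
  shows "P (vf_m2 q) = P' (vf_m2 q)"
proof
  fix x
  have lin: "lin_on (g_m2 H) vscale vscale P" and lin': "lin_on (g_m2 H) vscale vscale P'"
    using P P' unfolding tanaka1_cond_def by blast+
  have on_brackets: "P (vf_m2 (-4 *\<^sub>R ImH p p')) = P' (vf_m2 (-4 *\<^sub>R ImH p p'))" for p p'
  proof -
    have "vf_bracket (X1 (vf_m1 p)) (vf_m1 p') - vf_bracket (X1 (vf_m1 p')) (vf_m1 p)
        = P (vf_bracket (vf_m1 p) (vf_m1 p'))"
      "vf_bracket (X1 (vf_m1 p)) (vf_m1 p') - vf_bracket (X1 (vf_m1 p')) (vf_m1 p)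
        = P' (vf_bracket (vf_m1 p) (vf_m1 p'))"
      using P P' unfolding tanaka1_cond_def by simp_all
    then show ?thesis by (simp add: bracket_vf_m1_vf_m1)
  qed
  define L where "L a = P (vf_m2 a) x - P' (vf_m2 a) x" for a
  have add: "L (a + b) = L a + L b" for a b
  proof -
    have "P (vf_m2 (a + b)) = P (vf_m2 a) + P (vf_m2 b)" "P' (vf_m2 (a + b)) = P' (vf_m2 a) + P' (vf_m2 b)"
      using lin lin' unfolding lin_on_def by (simp_all add: vf_m2_add[symmetric])
    then show ?thesis by (simp add: L_def)
  qed
  have scaleR: "L (c *\<^sub>R a) = c *\<^sub>R L a" for c a
  proof -
    have "P (vf_m2 (c *\<^sub>R a)) = vscale c (P (vf_m2 a))" "P' (vf_m2 (c *\<^sub>R a)) = vscale c (P' (vf_m2 a))"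
      using lin lin' unfolding lin_on_def by (simp_all add: vscale_vf_m2[symmetric])
    then show ?thesis by (simp add: L_def vscale_def algebra_simps)
  qed
  have "L q = 0"
  proof (rule additive_eq_0_if_vanishes_on_ImH[OF add scaleR])
    fix p p'
    have "L (-4 *\<^sub>R ImH p p') = 0" using on_brackets[of p p'] by (simp add: L_def)
    then show "L (ImH p p') = 0" using scaleR[of "-4" "ImH p p'"] by simp
  qed
  then show "P (vf_m2 q) x = P' (vf_m2 q) x" by (simp add: L_def)
qed

end

section \<open>Coordinates on the second prolongation\<close>

text \<open>Coordinates of an element X2 of tg2 with its companion map X2':
  X2 (vf_m1 p) (vf_m1 p') = vf_0 (Cm p p') (sm p p') and X2' (vf_m2 q) = vf_0 (Dm q) (tm q).
  The last four assumptions are the defining identities of tg2 written in these coordinates.\<close>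

locale tg2_coords = nondeg_herm H for H :: "complex^'n::finite \<Rightarrow> complex^'n \<Rightarrow> complex^'k::finite" +
  fixes X2 :: "('n,'k) vf \<Rightarrow> ('n,'k) vf \<Rightarrow> ('n,'k) vf"
    and Cm :: "complex^'n \<Rightarrow> complex^'n \<Rightarrow> complex^'n^'n" and sm :: "complex^'n \<Rightarrow> complex^'n \<Rightarrow> real^'k^'k"
    and Dm :: "real^'k \<Rightarrow> complex^'n^'n" and tm :: "real^'k \<Rightarrow> real^'k^'k"
  assumes X2_outside: "A \<notin> g_m1 H \<Longrightarrow> X2 A = 0"
    and X2_outside': "A' \<notin> g_m1 H \<Longrightarrow> X2 A A' = 0"
    and X2_vf_m1: "X2 (vf_m1 p) (vf_m1 p') = vf_0 (Cm p p') (sm p p')"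
    and is_g0_Cm_sm: "is_g0 (Cm p p') (sm p p')"
    and is_g0_Dm_tm: "is_g0 (Dm q) (tm q)"
    and Dm_add: "Dm (a + b) = Dm a + Dm b" and tm_add: "tm (a + b) = tm a + tm b"
    and Dm_scaleR: "Dm (c *\<^sub>R a) = c *\<^sub>R Dm a" and tm_scaleR: "tm (c *\<^sub>R a) = c *\<^sub>R tm a"
    and Cm_antisym: "Cm p p' - Cm p' p = -4 *\<^sub>R Dm (ImH p p')"
    and sm_antisym: "sm p p' - sm p' p = -4 *\<^sub>R tm (ImH p p')"
    and Cm_swap_apply: "Cm p p'' *v p' - Cm p p' *v p'' = 4 *\<^sub>R (Dm (ImH p' p'') *v p)"
    and sm_apply: "sm p p' *v q = -4 *\<^sub>R ImH (Dm q *v p) p'"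
begin

lemma Dm_zero: "Dm 0 = 0" using Dm_scaleR[of 0 0] by simp
lemma tm_zero: "tm 0 = 0" using tm_scaleR[of 0 0] by simp
lemma Dm_uminus: "Dm (- a) = - Dm a" using Dm_scaleR[of "-1" a] by simp

lemma Dm_unique:
  assumes "tg2_coords H X2 Cm' sm' Dm' tm'"
  shows "Dm' = Dm"
proof -
  interpret Y: tg2_coords H X2 Cm' sm' Dm' tm' by fact
  have "Cm' p p' = Cm p p'" for p p' using X2_vf_m1 Y.X2_vf_m1 by (metis vf_0_eq_iff)
  then have on_ImH: "Dm' (ImH p p') = Dm (ImH p p')" for p p'
    using Cm_antisym[of p p'] Y.Cm_antisym[of p p'] by simp
  have "Dm' q - Dm q = 0" for q
    by (rule additive_eq_0_if_vanishes_on_ImH)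
      (simp_all add: Dm_add Y.Dm_add Dm_scaleR Y.Dm_scaleR on_ImH algebra_simps)
  then show ?thesis by auto
qed

text \<open>X2 is determined by Dm: sm is by sm_apply, and the difference of the two Cm's is a
  symmetric skew-adjoint trilinear map.\<close>

lemma eq_if_same_Dm:
  assumes "tg2_coords H Y2 Cm' sm' Dm tm'"
  shows "Y2 = X2"
proof -
  interpret Y: tg2_coords H Y2 Cm' sm' Dm tm' by fact
  have sm_eq: "sm' p p' = sm p p'" for p p'
    by (simp add: matrix_eq sm_apply Y.sm_apply)
  define D where "D p p' z = Cm' p p' *v z - Cm p p' *v z" for p p' z
  have sym12: "D a b c = D b a c" for a b c
  proof -
    have "(Cm' a b - Cm' b a) *v c = (Cm a b - Cm b a) *v c" by (simp add: Cm_antisym Y.Cm_antisym)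
    then show ?thesis unfolding D_def matrix_vector_mult_diff_rdistrib by (simp add: algebra_simps)
  qed
  have sym23: "D a b c = D a c b" for a b c
    using Cm_swap_apply[of a c b] Y.Cm_swap_apply[of a c b] unfolding D_def by (simp add: algebra_simps)
  have scale3: "D a b (x *s c) = x *s D a b c" for a b c x
    unfolding D_def by (simp add: vector_scalar_commute vector_ssub_ldistrib)
  have skew: "H (D a b c) d + H c (D a b d) = 0" for a b c d
    using is_g0_polarized[OF is_g0_Cm_sm, of a b c d] is_g0_polarized[OF Y.is_g0_Cm_sm, of a b c d]
    unfolding D_def sm_eq by (simp add: H_diff_left H_diff_right algebra_simps)
  have "D a b c = 0" for a b c by (rule symmetric_skew_adjoint_trilinear_eq_0[OF sym12 sym23 scale3 skew])
  then have "Cm' p p' = Cm p p'" for p p' by (simp add: matrix_eq D_def)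
  then have on_g_m1: "Y2 (vf_m1 p) (vf_m1 p') = X2 (vf_m1 p) (vf_m1 p')" for p p'
    by (simp add: X2_vf_m1 Y.X2_vf_m1 sm_eq)
  show ?thesis
  proof (rule ext, rule ext)
    fix A A'
    show "Y2 A A' = X2 A A'"
    proof (cases "A \<in> g_m1 H \<and> A' \<in> g_m1 H")
      case True then show ?thesis using on_g_m1 by (auto simp: g_m1_eq)
    next
      case False then show ?thesis using X2_outside Y.X2_outside X2_outside' Y.X2_outside'
        by (metis zero_fun_def)
    qed
  qed
qed

lemma Cm_i_apply:
  "Cm (\<i> *s x) (\<i> *s x) *v x = - (Cm x x *v x) - (12 * \<i>) *s (Dm (Re_vec (H x x)) *v x)"
proof -
  define h where "h = Re_vec (H x x)"
  define y where "y = \<i> *s x"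
  define T0 where "T0 = Cm x x *v x"
  define Dx where "Dx = Dm h *v x"
  have ImH_x_y: "ImH x y = - h"
    by (simp add: vec_eq_iff ImH_def y_def h_def H_scale_right)
  have mult_y: "M *v y = \<i> *s (M *v x)" for M :: "complex^'n^'n"
    unfolding y_def by (rule vector_scalar_commute)
  have xy: "Cm x y *v x = \<i> *s T0 - 4 *\<^sub>R Dx"
    using Cm_swap_apply[of x y x] unfolding T0_def Dx_def
    by (simp add: ImH_x_y Dm_uminus mult_y uminus_matrix_vector_mult algebra_simps)
  have yx: "Cm y x *v x = \<i> *s T0 - 8 *\<^sub>R Dx"
  proof -
    have "Cm x y *v x - Cm y x *v x = -4 *\<^sub>R (Dm (ImH x y) *v x)"
      by (metis Cm_antisym matrix_vector_mult_diff_rdistrib scaleR_matrix_vector_mult)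
    then show ?thesis unfolding Dx_def
      by (simp add: ImH_x_y Dm_uminus xy uminus_matrix_vector_mult algebra_simps Dx_def)
  qed
  have "Cm y y *v x - Cm y x *v y = 4 *\<^sub>R (Dm (ImH x y) *v y)" by (rule Cm_swap_apply)
  then have "Cm y y *v x = - T0 - (12 * \<i>) *s Dx"
    by (simp add: ImH_x_y Dm_uminus mult_y yx uminus_matrix_vector_mult vec_eq_iff scaleR_conv_of_real
        algebra_simps Dx_def) (simp add: eq_neg_iff_add_eq_0 add_ac)
  then show ?thesis by (simp add: y_def T0_def Dx_def h_def)
qed

text \<open>Evaluate the g^0 identity for (Cm, sm) at (x, x) and at (i x, i x) against sm_apply;
  Cm_i_apply relates the two.\<close>

lemma Im_H_Dm_diag: "Im (H (Dm (Re_vec (H x x)) *v x) x $ j) = 0"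
proof -
  define h where "h = Re_vec (H x x)"
  define y where "y = \<i> *s x"
  define T0 where "T0 = Cm x x *v x"
  define Dx where "Dx = Dm h *v x"
  have h_y: "h = Re_vec (H y y)" by (simp add: h_def y_def H_scale_left H_scale_right vec_eq_iff)
  have "2 *\<^sub>R Re_vec (H T0 x) = -4 *\<^sub>R ImH Dx x"
    unfolding T0_def Dx_def h_def is_g0_diag[OF is_g0_Cm_sm, symmetric] by (rule sm_apply)
  then have 1: "Re (H T0 x $ j) * 2 = -4 * Im (H Dx x $ j)"
    by (simp add: vec_eq_iff ImH_def)
  have "2 *\<^sub>R Re_vec (H (Cm y y *v x) x) = -4 *\<^sub>R ImH (Dm h *v y) y"
    unfolding h_def is_g0_diag[OF is_g0_Cm_sm, symmetric] by (rule sm_apply)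
  moreover have "ImH (Dm h *v y) y = ImH Dx x"
    by (simp add: y_def Dx_def vector_scalar_commute ImH_def H_scale_left H_scale_right vec_eq_iff)
  ultimately have 2: "2 * (- Re (H T0 x $ j) + 12 * Im (H Dx x $ j)) = -4 * Im (H Dx x $ j)"
    unfolding y_def Cm_i_apply by (simp add: vec_eq_iff ImH_def H_diff_left H_uminus_left H_scale_left
        T0_def Dx_def h_def)
  from 1 2 have "Im (H Dx x $ j) = 0" by argo
  then show ?thesis by (simp add: Dx_def h_def)
qed

lemma tm_sym: "tm a *v b = tm b *v a"
proof -
  have on_ImH: "tm (ImH p p') *v q = tm q *v ImH p p'" for p p' q
  proof -
    have "(sm p p' - sm p' p) *v q = -4 *\<^sub>R (tm (ImH p p') *v q)"
      by (simp only: sm_antisym scaleR_matrix_vector_mult)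
    moreover have "(sm p p' - sm p' p) *v q = -4 *\<^sub>R (ImH (Dm q *v p) p' + ImH p (Dm q *v p'))"
      by (simp add: matrix_vector_mult_diff_rdistrib sm_apply ImH_swap[of "Dm q *v p'" p] algebra_simps)
    moreover have "ImH (Dm q *v p) p' + ImH p (Dm q *v p') = tm q *v ImH p p'"
      using arg_cong[OF is_g0_polarized[OF is_g0_Dm_tm, of q p p'], of Im_vec]
      by (simp add: ImH_def Im_vec_rmat)
    ultimately show ?thesis by simp
  qed
  have "tm a *v b - tm b *v a = 0"
  proof (rule additive_eq_0_if_vanishes_on_ImH[where L="\<lambda>a. tm a *v b - tm b *v a"])
    show "tm (x + y) *v b - tm b *v (x + y) = (tm x *v b - tm b *v x) + (tm y *v b - tm b *v y)" for x y
      by (simp add: tm_add matrix_vector_mult_add_rdistrib matrix_vector_right_distrib)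
    show "tm (c *\<^sub>R x) *v b - tm b *v (c *\<^sub>R x) = c *\<^sub>R (tm x *v b - tm b *v x)" for c x
      by (simp add: tm_scaleR scaleR_matrix_vector_mult matrix_vector_mult_scaleR algebra_simps)
    show "tm (ImH p p') *v b - tm b *v ImH p p' = 0" for p p' by (simp add: on_ImH)
  qed
  then show ?thesis by simp
qed

lemma is_g2_B_of_D: "is_g2 (B_of_D Dm) (r_of_t tm)"
  unfolding is_g2_def
proof (intro conjI allI)
  show "cbilin (B_of_D Dm)" by (rule cbilin_B_of_D) (simp_all add: Dm_add Dm_scaleR)
  show "cbilin (r_of_t tm)" by (rule cbilin_r_of_t) (simp_all add: tm_add tm_scaleR)
  show "r_of_t tm u v = r_of_t tm v u" for u v by (rule r_of_t_sym) (rule tm_sym)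
next
  fix z u
  have "r_of_t tm (H z z) (rvec u) = (- 1/2) *s rvec (tm u *v Re_vec (H z z))"
    by (simp add: r_of_t_def tm_zero rmat_decomp Im_vec_H_diag)
  then show "(\<chi> j. complex_of_real (Re (H (B_of_D Dm z (rvec u)) z $ j))) = r_of_t tm (H z z) (rvec u)"
    by (simp add: is_g0_diag[OF is_g0_Dm_tm] B_of_D_def Dm_zero H_uminus_left vec_eq_iff)
next
  fix z j
  have "B_of_D Dm z (H z z) = - (Dm (Re_vec (H z z)) *v z)"
    by (simp add: B_of_D_def Dm_zero Im_vec_H_diag)
  then show "Im (H (B_of_D Dm z (H z z)) z $ j) = 0"
    using Im_H_Dm_diag[of z j] by (simp add: H_uminus_left)
qed

end

context nondeg_herm
begin

lemma tg2_has_coords: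
  assumes "X2 \<in> tg2 H"
  obtains Cm sm Dm tm where "tg2_coords H X2 Cm sm Dm tm"
proof -
  from assms obtain X2' where
    outside: "\<And>A. A \<notin> g_m1 H \<Longrightarrow> X2 A = 0" and
    in_tg1: "\<And>A. A \<in> g_m1 H \<Longrightarrow> X2 A \<in> tg1 H" and
    X2'_g0: "\<And>Q. Q \<in> g_m2 H \<Longrightarrow> X2' Q \<in> g_0 H" and
    X2'_lin: "lin_on (g_m2 H) vscale vscale X2'" and
    antisym: "\<And>A B. A \<in> g_m1 H \<Longrightarrow> B \<in> g_m1 H \<Longrightarrow> X2 A B - X2 B A = X2' (vf_bracket A B)" and
    bracket_X2': "\<And>Q A. Q \<in> g_m2 H \<Longrightarrow> A \<in> g_m1 H \<Longrightarrow> vf_bracket (X2' Q) A = prime1 H (X2 A) Q"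
    unfolding tg2_def by blast
  obtain Cm sm where Cm_sm: "\<And>pp. X2 (vf_m1 (fst pp)) (vf_m1 (snd pp)) = vf_0 (Cm pp) (sm pp)"
      "\<And>pp. is_g0 (Cm pp) (sm pp)"
    by (rule choose_g_0_coeffs[of "\<lambda>pp. X2 (vf_m1 (fst pp)) (vf_m1 (snd pp))"])
      (use in_tg1 in \<open>auto simp: tg1_def\<close>)
  obtain Dm tm where Dm_tm: "\<And>q. X2' (vf_m2 q) = vf_0 (Dm q) (tm q)" "\<And>q. is_g0 (Dm q) (tm q)"
    by (rule choose_g_0_coeffs[of "\<lambda>q. X2' (vf_m2 q)"]) (auto simp: X2'_g0)
  note add = lin_on_g_m2_coeffs(1)[OF X2'_lin Dm_tm(1)]
    and scaleR = lin_on_g_m2_coeffs(2)[OF X2'_lin Dm_tm(1)]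
  show ?thesis
  proof (rule that, unfold_locales)
    let ?Cm = "\<lambda>p p'. Cm (p, p')" and ?sm = "\<lambda>p p'. sm (p, p')"
    show "A' \<notin> g_m1 H \<Longrightarrow> X2 A A' = 0" for A A'
      using outside in_tg1 by (cases "A \<in> g_m1 H") (auto simp: tg1_def)
    have "vf_0 (?Cm p p' - ?Cm p' p) (?sm p p' - ?sm p' p)
        = vf_0 (Dm (-4 *\<^sub>R ImH p p')) (tm (-4 *\<^sub>R ImH p p'))" for p p'
      using antisym[of "vf_m1 p" "vf_m1 p'"] Cm_sm(1)[of "(p, p')"] Cm_sm(1)[of "(p', p)"]
      by (simp add: vf_0_diff bracket_vf_m1_vf_m1 Dm_tm)
    then show "?Cm p p' - ?Cm p' p = -4 *\<^sub>R Dm (ImH p p')" "?sm p p' - ?sm p' p = -4 *\<^sub>R tm (ImH p p')"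
      for p p' using scaleR[of "-4" "ImH p p'"] by (simp_all add: vf_0_eq_iff)
    have coeffs: "X2 (vf_m1 p) (vf_m1 p') = vf_0 (?Cm p p') (?sm p p')" "is_g0 (?Cm p p') (?sm p p')"
      for p p' using Cm_sm[of "(p, p')"] by simp_all
    have prime_X2: "prime1 H (X2 (vf_m1 p)) (vf_m2 q) = vf_m1 (- (Dm q *v p))" for p q
      using bracket_X2'[of "vf_m2 q" "vf_m1 p"] by (simp add: Dm_tm bracket_vf_0_vf_m1)
    note identities = tg1_coeff_identities[OF in_tg1[OF vf_m1_in_g_m1] coeffs prime_X2]
    show "?Cm p p'' *v p' - ?Cm p p' *v p'' = 4 *\<^sub>R (Dm (ImH p' p'') *v p)" for p p' p''
      using identities(1)[of p p'' p'] scaleR[of "-4" "ImH p' p''"]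
      by (simp add: uminus_matrix_vector_mult scaleR_matrix_vector_mult)
    show "?sm p p' *v q = -4 *\<^sub>R ImH (Dm q *v p) p'" for p p' q
      using identities(2)[of p p' q] by (simp add: ImH_def H_uminus_left vec_eq_iff)
  qed (use outside Cm_sm Dm_tm add scaleR in auto)
qed

end

section \<open>The image of g^2 in the second prolongation\<close>

context nondeg_herm
begin

definition Tvec :: "(complex^'n \<Rightarrow> complex^'k \<Rightarrow> complex^'n) \<Rightarrow> complex^'n \<Rightarrow> complex^'n \<Rightarrow> complex^'n
    \<Rightarrow> complex^'n" where
  "Tvec B p p' z = (2 * \<i>) *s (B p (H z p') + B p' (H z p) + B z (H p' p))"

definition Cmat :: "(complex^'n \<Rightarrow> complex^'k \<Rightarrow> complex^'n) \<Rightarrow> complex^'n \<Rightarrow> complex^'n \<Rightarrow> complex^'n^'n"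
  where "Cmat B p p' = matrix (Tvec B p p')"

definition smat :: "(complex^'n \<Rightarrow> complex^'k \<Rightarrow> complex^'n) \<Rightarrow> complex^'n \<Rightarrow> complex^'n \<Rightarrow> real^'k^'k"
  where "smat B p p' = matrix (\<lambda>q. 4 *\<^sub>R ImH (B p (rvec q)) p')"

definition m1_param :: "('n,'k) vf \<Rightarrow> complex^'n" where "m1_param A = fst (A (0, 0))"

text \<open>For X = vf_2 B r, ad2 B A A' = [[X, A], A'] is the image of X in the second prolongation;
  it depends on B only.\<close>

definition ad2 :: "(complex^'n \<Rightarrow> complex^'k \<Rightarrow> complex^'n) \<Rightarrow> ('n,'k) vf \<Rightarrow> ('n,'k) vf \<Rightarrow> ('n,'k) vf" where
  "ad2 B = (\<lambda>A A'. if A \<in> g_m1 H \<and> A' \<in> g_m1 H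
     then vf_0 (Cmat B (m1_param A) (m1_param A')) (smat B (m1_param A) (m1_param A')) else 0)"

lemma ad2_vf_m1: "ad2 B (vf_m1 p) (vf_m1 p') = vf_0 (Cmat B p p') (smat B p p')"
  by (simp add: ad2_def m1_param_def vf_m1_origin)

lemma ad2_add: "ad2 (\<lambda>z w. B1 z w + B2 z w) = ad2 B1 + ad2 B2"
proof -
  have C: "Cmat (\<lambda>z w. B1 z w + B2 z w) p p' = Cmat B1 p p' + Cmat B2 p p'" for p p'
    by (simp add: Cmat_def matrix_def Tvec_def vec_eq_iff algebra_simps)
  have S: "smat (\<lambda>z w. B1 z w + B2 z w) p p' = smat B1 p p' + smat B2 p p'" for p p'
    by (simp add: smat_def matrix_def ImH_add_left vec_eq_iff algebra_simps)
  show ?thesis by (rule ext, rule ext) (simp add: ad2_def C S vf_0_add)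
qed

lemma ad2_scaleR: "ad2 (\<lambda>z w. c *\<^sub>R B z w) = vscale3 c (ad2 B)"
proof -
  have C: "Cmat (\<lambda>z w. c *\<^sub>R B z w) p p' = c *\<^sub>R Cmat B p p'" for p p'
    by (simp add: Cmat_def matrix_def Tvec_def vec_eq_iff algebra_simps scaleR_vec_complex)
  have S: "smat (\<lambda>z w. c *\<^sub>R B z w) p p' = c *\<^sub>R smat B p p'" for p p'
    by (simp add: smat_def matrix_def ImH_scaleR_left vec_eq_iff algebra_simps)
  show ?thesis by (rule ext, rule ext) (simp add: ad2_def C S vscale_vf_0 vscale3_def vscale2_def)
qed

end

locale g2_elem = nondeg_herm H for H :: "complex^'n::finite \<Rightarrow> complex^'n \<Rightarrow> complex^'k::finite" +
  fixes B :: "complex^'n \<Rightarrow> complex^'k \<Rightarrow> complex^'n" and r :: "complex^'k \<Rightarrow> complex^'k \<Rightarrow> complex^'k"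
  assumes cbilin_B: "cbilin B" and cbilin_r: "cbilin r" and r_sym: "r v w = r w v"
    and Re_H_B: "(\<chi> j. complex_of_real (Re (H (B z (rvec u)) z $ j))) = r (H z z) (rvec u)"
    and Im_H_B_diag: "Im (H (B z (H z z)) z $ j) = 0"
begin

lemmas B_simps = cbilin_simps[OF cbilin_B] and r_simps = cbilin_simps[OF cbilin_r]

lemma Im_r_real: "Im_vec (r (rvec a) (rvec u)) = 0"
proof (rule additive_eq_0_if_vanishes_on_H_diag[where L="\<lambda>a. Im_vec (r (rvec a) (rvec u))"])
  show "Im_vec (r (rvec (a + b)) (rvec u)) = Im_vec (r (rvec a) (rvec u)) + Im_vec (r (rvec b) (rvec u))" for a b
    by (simp add: r_simps)
  show "Im_vec (r (rvec (c *\<^sub>R a)) (rvec u)) = c *\<^sub>R Im_vec (r (rvec a) (rvec u))" for c a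
    by (simp add: r_simps vec_eq_iff)
  show "Im_vec (r (rvec (Re_vec (H z z))) (rvec u)) = 0" for z
    unfolding H_diag_real[symmetric] Re_H_B[symmetric] by (simp add: vec_eq_iff)
qed

lemma Im_vec_r: "Im_vec (r a (rvec u)) = Re_vec (r (rvec (Im_vec a)) (rvec u))"
proof -
  have "r a (rvec u) = r (rvec (Re_vec a)) (rvec u) + \<i> *s r (rvec (Im_vec a)) (rvec u)"
    by (subst vec_complex_decomp[of a]) (simp add: r_simps)
  then show ?thesis using Im_r_real[of "Re_vec a" u] Im_r_real[of "Im_vec a" u] by (simp add: vec_eq_iff)
qed

lemma H_B_polarized: "H (B a (rvec u)) b + H a (B b (rvec u)) = 2 *s r (H a b) (rvec u)"
proof -
  have "(H (B a (rvec u)) b + H a (B b (rvec u)) - 2 *s r (H a b) (rvec u)) $ j = 0" for j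
  proof (rule sesquilinear_eq_0_if_diag_eq_0
      [where S="\<lambda>a b. (H (B a (rvec u)) b + H a (B b (rvec u)) - 2 *s r (H a b) (rvec u)) $ j"])
    fix a
    have Re_j: "complex_of_real (Re (H (B a (rvec u)) a $ j)) = r (H a a) (rvec u) $ j"
      using arg_cong[OF Re_H_B[of a u], of "\<lambda>v. v $ j"] by simp
    show "(H (B a (rvec u)) a + H a (B a (rvec u)) - 2 *s r (H a a) (rvec u)) $ j = 0"
      using Re_j[symmetric] H_swap[of "B a (rvec u)" a j] by (simp add: complex_eq_iff)
  qed (simp_all add: H_simps B_simps r_simps algebra_simps)
  then show ?thesis by (simp add: vec_eq_iff)
qed

lemma H_B_H_polarized: "H (B a (H c d)) b + H a (B b (H d c)) = 2 *s r (H a b) (H c d)"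
proof -
  define R where "R = Re_vec (H c d)"
  define I where "I = Im_vec (H c d)"
  have cd: "H c d = rvec R + \<i> *s rvec I" unfolding R_def I_def by (rule vec_complex_decomp)
  have dc: "H d c = rvec R - \<i> *s rvec I"
    unfolding R_def I_def by (simp add: vec_eq_iff H_swap[of c d] complex_eq_iff)
  have "H (B a (rvec R + \<i> *s rvec I)) b + H a (B b (rvec R - \<i> *s rvec I))
     = (H (B a (rvec R)) b + H a (B b (rvec R))) + \<i> *s (H (B a (rvec I)) b + H a (B b (rvec I)))"
    by (simp add: B_simps H_simps vec_eq_iff algebra_simps)
  also have "\<dots> = 2 *s r (H a b) (rvec R) + \<i> *s (2 *s r (H a b) (rvec I))"
    by (simp only: H_B_polarized)
  also have "\<dots> = 2 *s r (H a b) (rvec R + \<i> *s rvec I)"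
    by (simp add: r_simps vec_eq_iff algebra_simps)
  finally show ?thesis unfolding cd dc .
qed

definition K4 :: "'k \<Rightarrow> complex^'n \<Rightarrow> complex^'n \<Rightarrow> complex^'n \<Rightarrow> complex^'n \<Rightarrow> complex" where
  "K4 j a b c d = H (B a (H b c)) d $ j"

lemma K4_simps:
  "K4 j (x + y) b c d = K4 j x b c d + K4 j y b c d"
  "K4 j a (x + y) c d = K4 j a x c d + K4 j a y c d"
  "K4 j a b (x + y) d = K4 j a b x d + K4 j a b y d"
  "K4 j a b c (x + y) = K4 j a b c x + K4 j a b c y"
  "K4 j (t *s a) b c d = t * K4 j a b c d"
  "K4 j a (t *s b) c d = t * K4 j a b c d"
  "K4 j a b (t *s c) d = cnj t * K4 j a b c d"
  "K4 j a b c (t *s d) = cnj t * K4 j a b c d"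
  unfolding K4_def by (simp_all add: B_simps H_simps)

lemma Im_K4_swap: "Im (K4 j a c d b) - Im (K4 j b d c a) = 2 * Im (r (H a b) (H c d) $ j)"
proof -
  have "H (B a (H c d)) b $ j + H a (B b (H d c)) $ j = 2 * r (H a b) (H c d) $ j"
    using arg_cong[OF H_B_H_polarized[of a c d b], of "\<lambda>v. v $ j"] by simp
  then have "K4 j a c d b + cnj (K4 j b d c a) = 2 * r (H a b) (H c d) $ j"
    unfolding K4_def using H_swap[of "B b (H d c)" a j] by simp
  then have "Im (K4 j a c d b + cnj (K4 j b d c a)) = Im (2 * r (H a b) (H c d) $ j)" by simp
  then show ?thesis by simp
qed

text \<open>Polarize the quartic identity Im_H_B_diag at (z, p, p') and at (z, i p, i p'); the unwanted
  terms cancel in pairs by H_B_H_polarized and the symmetry of r.\<close>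

lemma Im_K4_sum: "Im (K4 j p z p' z + K4 j p' z p z + K4 j z p' p z + K4 j p z z p') = 0"
proof -
  have polar: "Im (K4 j y w x x + K4 j y x w x + K4 j y x x w + K4 j w y x x + K4 j x y w x + K4 j x y x w
           + K4 j w x y x + K4 j x w y x + K4 j x x y w + K4 j w x x y + K4 j x w x y + K4 j x x w y) = 0"
    for x y w
    by (rule Im_diag_eq_0_polarization) (simp_all add: K4_simps, simp add: K4_def Im_H_B_diag)
  have r12: "Im (r (H p p') (H z z) $ j) + Im (r (H z z) (H p' p) $ j) = 0"
  proof -
    have "Im_vec (r (H p' p) (rvec (Re_vec (H z z)))) = - Im_vec (r (H p p') (rvec (Re_vec (H z z))))"
      unfolding Im_vec_r by (simp add: ImH_swap[of p' p, unfolded ImH_def] r_simps)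
    then show ?thesis using r_sym[of "H z z" "H p' p"] H_diag_real[of z] by (simp add: vec_eq_iff)
  qed
  have r34: "Im (r (H p z) (H z p') $ j) = Im (r (H z p') (H p z) $ j)" using r_sym by simp
  from polar[where y=p' and w=p and x=z] polar[where y="\<i> *s p'" and w="\<i> *s p" and x=z]
  have "Im (K4 j p' z p z) + Im (K4 j p' z z p) + Im (K4 j z p' p z) + Im (K4 j z p' z p)
     + Im (K4 j p z p' z) + Im (K4 j z p p' z) + Im (K4 j p z z p') + Im (K4 j z p z p') = 0"
    by (simp add: K4_simps)
  with Im_K4_swap[where j=j and a=p and c=z and d=z and b=p'] Im_K4_swap[where j=j and a=z and c=p' and d=p and b=z]
    Im_K4_swap[where j=j and a=p and c=z and d=p' and b=z] Im_K4_swap[where j=j and a=z and c=p and d=z and b=p'] r12 r34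
  show ?thesis by simp
qed

lemma Tvec_clin: "clin (Tvec B p p')"
  unfolding clin_def Tvec_def by (simp add: B_simps H_simps vec_eq_iff algebra_simps)

lemma Cmat_apply: "Cmat B p p' *v z = Tvec B p p' z"
  unfolding Cmat_def by (rule matrix_works_clin[OF Tvec_clin])

lemma smat_apply: "smat B p p' *v q = 4 *\<^sub>R ImH (B p (rvec q)) p'"
  unfolding smat_def
  by (rule matrix_works_additive_homogeneous)
    (simp_all add: B_simps ImH_add_left ImH_scaleR_left scaleR_vec_complex[symmetric]
      cbilin_scaleR_right[OF cbilin_B] algebra_simps)

lemma Tvec_swap12: "Tvec B p p' z - Tvec B p' p z = 4 *\<^sub>R B z (rvec (ImH p p'))"
proof -
  have "Tvec B p p' z - Tvec B p' p z = (2 * \<i>) *s B z (H p' p - H p p')"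
    by (simp add: Tvec_def B_simps vec_eq_iff algebra_simps)
  also have "H p' p - H p p' = - ((2 * \<i>) *s rvec (ImH p p'))" by (simp add: H_minus_H_swap[symmetric])
  finally show ?thesis by (simp add: B_simps scaleR_vec_complex vec_eq_iff)
qed

lemma Tvec_swap23: "Tvec B p p'' p' - Tvec B p p' p'' = B p (rvec (-4 *\<^sub>R ImH p' p''))"
proof -
  have "Tvec B p p'' p' - Tvec B p p' p'' = (2 * \<i>) *s B p (H p' p'' - H p'' p')"
    by (simp add: Tvec_def B_simps vec_eq_iff algebra_simps)
  also have "H p' p'' - H p'' p' = (2 * \<i>) *s rvec (ImH p' p'')" by (rule H_minus_H_swap)
  finally show ?thesis by (simp add: B_simps scaleR_vec_complex vec_eq_iff)
qed

lemma is_g0_Cmat_smat: "is_g0 (Cmat B p p') (smat B p p')"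
  unfolding is_g0_def
proof
  fix z
  have "2 * Re (H (Tvec B p p' z) z $ j) = 4 * Im (H (B p (H z z)) p' $ j)" for j
  proof -
    have "H (Tvec B p p' z) z $ j = (2 * \<i>) * (K4 j p z p' z + K4 j p' z p z + K4 j z p' p z)"
      by (simp add: Tvec_def K4_def H_simps distrib_left)
    then show ?thesis using Im_K4_sum[of j p z p'] by (simp add: K4_def)
  qed
  then show "2 *\<^sub>R (\<chi> j. Re (H (Cmat B p p' *v z) z $ j)) = smat B p p' *v (\<chi> j. Re (H z z $ j))"
    unfolding Cmat_apply Re_vec_def[symmetric] smat_apply H_diag_real[symmetric]
    by (simp add: vec_eq_iff ImH_def)
qed

lemma Cmat_add_left: "Cmat B (a + b) p = Cmat B a p + Cmat B b p"
  by (simp add: matrix_eq matrix_vector_mult_add_rdistrib Cmat_apply Tvec_def B_simps H_simps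
      vec_eq_iff algebra_simps)
lemma Cmat_add_right: "Cmat B p (a + b) = Cmat B p a + Cmat B p b"
  by (simp add: matrix_eq matrix_vector_mult_add_rdistrib Cmat_apply Tvec_def B_simps H_simps
      vec_eq_iff algebra_simps)
lemma Cmat_scaleR_left: "Cmat B (c *\<^sub>R a) p = c *\<^sub>R Cmat B a p"
  by (simp add: matrix_eq scaleR_matrix_vector_mult Cmat_apply Tvec_def B_simps H_simps
      scaleR_vec_complex vec_eq_iff algebra_simps)
lemma Cmat_scaleR_right: "Cmat B p (c *\<^sub>R a) = c *\<^sub>R Cmat B p a"
  by (simp add: matrix_eq scaleR_matrix_vector_mult Cmat_apply Tvec_def B_simps H_simps
      scaleR_vec_complex vec_eq_iff algebra_simps)
lemma smat_add_left: "smat B (a + b) p = smat B a p + smat B b p"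
  by (simp add: matrix_eq matrix_vector_mult_add_rdistrib smat_apply ImH_add_left B_simps algebra_simps)
lemma smat_add_right: "smat B p (a + b) = smat B p a + smat B p b"
  by (simp add: matrix_eq matrix_vector_mult_add_rdistrib smat_apply ImH_add_right algebra_simps)
lemma smat_scaleR_left: "smat B (c *\<^sub>R a) p = c *\<^sub>R smat B a p"
  by (simp add: matrix_eq scaleR_matrix_vector_mult smat_apply ImH_scaleR_left cbilin_scaleR_left[OF cbilin_B])
lemma smat_scaleR_right: "smat B p (c *\<^sub>R a) = c *\<^sub>R smat B p a"
  by (simp add: matrix_eq scaleR_matrix_vector_mult smat_apply ImH_scaleR_right)

definition Dmat :: "real^'k \<Rightarrow> complex^'n^'n" where "Dmat q = matrix (\<lambda>z. - B z (rvec q))"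
definition tmat :: "real^'k \<Rightarrow> real^'k^'k" where "tmat q = matrix (\<lambda>a. -2 *\<^sub>R Re_vec (r (rvec a) (rvec q)))"

lemma Dmat_apply: "Dmat q *v z = - B z (rvec q)"
  unfolding Dmat_def by (rule matrix_works_clin) (simp add: clin_def B_simps vec_eq_iff)

lemma tmat_apply: "tmat q *v a = -2 *\<^sub>R Re_vec (r (rvec a) (rvec q))"
  unfolding tmat_def
  by (rule matrix_works_additive_homogeneous)
    (simp_all add: r_simps scaleR_vec_complex[symmetric] cbilin_scaleR_left[OF cbilin_r] vec_eq_iff
      algebra_simps)

lemma Dmat_add: "Dmat (a + b) = Dmat a + Dmat b"
  by (simp add: matrix_eq matrix_vector_mult_add_rdistrib Dmat_apply B_simps)
lemma Dmat_scaleR: "Dmat (c *\<^sub>R a) = c *\<^sub>R Dmat a"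
  by (simp add: matrix_eq scaleR_matrix_vector_mult Dmat_apply B_simps scaleR_vec_complex)
lemma tmat_add: "tmat (a + b) = tmat a + tmat b"
  by (simp add: matrix_eq matrix_vector_mult_add_rdistrib tmat_apply r_simps algebra_simps)
lemma tmat_scaleR: "tmat (c *\<^sub>R a) = c *\<^sub>R tmat a"
  by (simp add: matrix_eq scaleR_matrix_vector_mult tmat_apply r_simps vec_eq_iff)

lemma is_g0_Dmat_tmat: "is_g0 (Dmat q) (tmat q)"
  unfolding is_g0_def
proof
  fix z
  have "Re_vec (r (H z z) (rvec q)) = Re_vec (H (B z (rvec q)) z)"
    unfolding Re_H_B[symmetric] by (simp add: vec_eq_iff)
  then show "2 *\<^sub>R (\<chi> j. Re (H (Dmat q *v z) z $ j)) = tmat q *v (\<chi> j. Re (H z z $ j))"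
    unfolding Dmat_apply Re_vec_def[symmetric] tmat_apply H_diag_real[symmetric] by (simp add: H_uminus_left)
qed

lemma Cmat_antisym: "Cmat B p p' - Cmat B p' p = Dmat (-4 *\<^sub>R ImH p p')"
  by (simp add: matrix_eq matrix_vector_mult_diff_rdistrib Cmat_apply Tvec_swap12 Dmat_apply B_simps
      scaleR_vec_complex)

lemma smat_antisym: "smat B p p' - smat B p' p = tmat (-4 *\<^sub>R ImH p p')"
proof (unfold matrix_eq, intro allI)
  fix q
  have "Im_vec (H (B p (rvec q)) p' + H p (B p' (rvec q))) = Im_vec (2 *s r (H p p') (rvec q))"
    by (simp only: H_B_polarized)
  then have "ImH (B p (rvec q)) p' - ImH (B p' (rvec q)) p = 2 *\<^sub>R Re_vec (r (rvec (ImH p p')) (rvec q))"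
    using ImH_swap[of p "B p' (rvec q)"] Im_vec_r[of "H p p'" q] by (simp add: ImH_def vec_eq_iff)
  then show "(smat B p p' - smat B p' p) *v q = tmat (-4 *\<^sub>R ImH p p') *v q"
    by (simp add: matrix_vector_mult_diff_rdistrib smat_apply tmat_apply r_simps r_sym[of "rvec q"]
        scaleR_vec_complex vec_eq_iff algebra_simps)
qed

definition m2_param :: "('n,'k) vf \<Rightarrow> real^'k" where "m2_param Q = Re_vec (snd (Q (0, 0)))"

lemma m2_param_vf_m2 [simp]: "m2_param (vf_m2 q) = q" by (simp add: m2_param_def vf_m2_def)

definition ad2_prime :: "complex^'n \<Rightarrow> ('n,'k) vf \<Rightarrow> ('n,'k) vf" where
  "ad2_prime p Q = vf_m1 (B p (rvec (m2_param Q)))"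

lemma tanaka1_cond_ad2: "tanaka1_cond H (ad2 B (vf_m1 p)) (ad2_prime p)"
  unfolding tanaka1_cond_def
proof (intro conjI ballI)
  show "ad2_prime p Q \<in> g_m1 H" for Q by (simp add: ad2_prime_def)
  show "lin_on (g_m2 H) vscale vscale (ad2_prime p)"
    unfolding lin_on_def g_m2_eq
    by (auto simp: ad2_prime_def vf_m2_add vscale_vf_m2 vf_m1_add vscale_vf_m1 B_simps scaleR_vec_complex)
next
  fix A A' assume "A \<in> g_m1 H" "A' \<in> g_m1 H"
  then obtain p' p'' where A: "A = vf_m1 p'" "A' = vf_m1 p''" by (auto simp: g_m1_eq)
  have "- (Cmat B p p' *v p'') - - (Cmat B p p'' *v p') = B p (rvec (-4 *\<^sub>R ImH p' p''))"
    unfolding Tvec_swap23[symmetric] Cmat_apply by simp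
  then show "vf_bracket (ad2 B (vf_m1 p) A) A' - vf_bracket (ad2 B (vf_m1 p) A') A
      = ad2_prime p (vf_bracket A A')"
    unfolding A ad2_vf_m1 bracket_vf_0_vf_m1[OF is_g0_Cmat_smat] vf_m1_diff bracket_vf_m1_vf_m1
      ad2_prime_def m2_param_vf_m2 by simp
next
  fix Q A assume "Q \<in> g_m2 H" "A \<in> g_m1 H"
  then obtain q p' where A: "Q = vf_m2 q" "A = vf_m1 p'" by (auto simp: g_m1_eq g_m2_eq)
  show "vf_bracket (ad2_prime p Q) A = vf_bracket (ad2 B (vf_m1 p) A) Q"
    unfolding A ad2_vf_m1 ad2_prime_def m2_param_vf_m2 bracket_vf_m1_vf_m1 bracket_vf_0_vf_m2 smat_apply
    by simp
qed

lemma ad2_in_tg1: "ad2 B (vf_m1 p) \<in> tg1 H"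
  unfolding tg1_def
proof (intro CollectI conjI allI impI ballI)
  show "A \<notin> g_m1 H \<Longrightarrow> ad2 B (vf_m1 p) A = 0" for A by (simp add: ad2_def)
  show "A \<in> g_m1 H \<Longrightarrow> ad2 B (vf_m1 p) A \<in> g_0 H" for A
    using is_g0_Cmat_smat by (force simp: g_m1_eq ad2_vf_m1 g_0_eq)
  show "lin_on (g_m1 H) vscale vscale (ad2 B (vf_m1 p))"
    unfolding lin_on_def g_m1_eq
    by (auto simp: ad2_vf_m1 vf_m1_add vscale_vf_m1 vf_0_add vscale_vf_0 Cmat_add_right smat_add_right
        Cmat_scaleR_right smat_scaleR_right)
  show "\<exists>X1'. tanaka1_cond H (ad2 B (vf_m1 p)) X1'" using tanaka1_cond_ad2 by blast
qed

lemma prime1_ad2: "prime1 H (ad2 B (vf_m1 p)) (vf_m2 q) = vf_m1 (B p (rvec q))"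
  using tanaka1_cond_unique[OF prime1_in_tg1[OF ad2_in_tg1] tanaka1_cond_ad2]
  by (simp add: ad2_prime_def)

lemma B_eq_B_of_D_Dmat: "B = B_of_D Dmat"
proof (intro ext)
  fix z w
  have "B z w = B z (rvec (Re_vec w) + \<i> *s rvec (Im_vec w))" by (subst vec_complex_decomp) (rule refl)
  then show "B z w = B_of_D Dmat z w" by (simp add: B_of_D_def Dmat_apply B_simps)
qed

lemma tg2_coords_ad2: "tg2_coords H (ad2 B) (Cmat B) (smat B) Dmat tmat"
proof unfold_locales
  show "A \<notin> g_m1 H \<Longrightarrow> ad2 B A = 0" "A' \<notin> g_m1 H \<Longrightarrow> ad2 B A A' = 0" for A A'
    by (simp_all add: ad2_def fun_eq_iff)
  show "Cmat B p p'' *v p' - Cmat B p p' *v p'' = 4 *\<^sub>R (Dmat (ImH p' p'') *v p)" for p p' p''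
    using Tvec_swap23[of p p'' p'] by (simp add: Cmat_apply Dmat_apply B_simps scaleR_vec_complex)
  show "smat B p p' *v q = -4 *\<^sub>R ImH (Dmat q *v p) p'" for p p' q
    by (simp add: smat_apply Dmat_apply ImH_def H_uminus_left vec_eq_iff)
qed (simp_all add: ad2_vf_m1 is_g0_Cmat_smat is_g0_Dmat_tmat Dmat_add tmat_add Dmat_scaleR tmat_scaleR
    Cmat_antisym smat_antisym Dmat_scaleR[of "-4", simplified] tmat_scaleR[of "-4", simplified])

lemma lin_on_ad2: "lin_on (g_m1 H) vscale vscale2 (ad2 B)"
  unfolding lin_on_def g_m1_eq
proof (intro conjI allI ballI)
  fix x y assume "x \<in> range vf_m1" "y \<in> range vf_m1"
  then obtain p1 p2 where xy: "x = vf_m1 p1" "y = vf_m1 p2" by blast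
  show "ad2 B (x + y) = ad2 B x + ad2 B y" unfolding xy
    by (rule ext) (simp add: vf_m1_add ad2_def m1_param_def vf_m1_origin Cmat_add_left smat_add_left
        vf_0_add)
next
  fix c x assume "x \<in> range vf_m1"
  then obtain p1 where x: "x = vf_m1 p1" by blast
  show "ad2 B (vscale c x) = vscale2 c (ad2 B x)" unfolding x
    by (rule ext) (simp add: vscale_vf_m1 vscale2_def ad2_def m1_param_def vf_m1_origin
        Cmat_scaleR_left smat_scaleR_left vscale_vf_0)
qed

lemma ad2_in_tg2: "ad2 B \<in> tg2 H"
  unfolding tg2_def
proof (intro CollectI conjI allI impI ballI)
  show "A \<notin> g_m1 H \<Longrightarrow> ad2 B A = 0" for A by (simp add: ad2_def fun_eq_iff)
  show "A \<in> g_m1 H \<Longrightarrow> ad2 B A \<in> tg1 H" for A using ad2_in_tg1 by (auto simp: g_m1_eq)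
  show "lin_on (g_m1 H) vscale vscale2 (ad2 B)" by (rule lin_on_ad2)
  let ?X2' = "\<lambda>Q. vf_0 (Dmat (m2_param Q)) (tmat (m2_param Q))"
  show "\<exists>X2'. (\<forall>Q\<in>g_m2 H. X2' Q \<in> g_0 H) \<and> lin_on (g_m2 H) vscale vscale X2' \<and>
     (\<forall>A\<in>g_m1 H. \<forall>A'\<in>g_m1 H. ad2 B A A' - ad2 B A' A = X2' (vf_bracket A A')) \<and>
     (\<forall>Q\<in>g_m2 H. \<forall>A\<in>g_m1 H. vf_bracket (X2' Q) A = prime1 H (ad2 B A) Q)"
  proof (intro exI[of _ ?X2'] conjI ballI)
    show "?X2' Q \<in> g_0 H" for Q using is_g0_Dmat_tmat by (force simp: g_0_eq)
    show "lin_on (g_m2 H) vscale vscale ?X2'"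
      unfolding lin_on_def g_m2_eq
      by (auto simp: vf_m2_add vscale_vf_m2 vf_0_add vscale_vf_0 Dmat_add Dmat_scaleR tmat_add tmat_scaleR)
    show "ad2 B A A' - ad2 B A' A = ?X2' (vf_bracket A A')" if "A \<in> g_m1 H" "A' \<in> g_m1 H" for A A'
      using that by (auto simp: g_m1_eq ad2_vf_m1 vf_0_diff bracket_vf_m1_vf_m1 Cmat_antisym smat_antisym)
    show "vf_bracket (?X2' Q) A = prime1 H (ad2 B A) Q" if "Q \<in> g_m2 H" "A \<in> g_m1 H" for Q A
      using that
      by (auto simp: g_m1_eq g_m2_eq bracket_vf_0_vf_m1[OF is_g0_Dmat_tmat] Dmat_apply prime1_ad2)
  qed
qed

end

section \<open>The isomorphism\<close>

context nondeg_herm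
begin

lemma g2_elemI: "is_g2 B r \<Longrightarrow> g2_elem H B r"
  by (intro g2_elem.intro nondeg_herm_axioms g2_elem_axioms.intro) (auto simp: is_g2_def)

lemma is_g2_zero: "is_g2 (\<lambda>z w. 0) (\<lambda>u v. 0)"
  unfolding is_g2_def cbilin_def clin_def by (simp add: vec_eq_iff)

lemma is_g2_add: "is_g2 B1 r1 \<Longrightarrow> is_g2 B2 r2 \<Longrightarrow> is_g2 (\<lambda>z w. B1 z w + B2 z w) (\<lambda>u v. r1 u v + r2 u v)"
  unfolding is_g2_def cbilin_def clin_def by (simp add: vector_add_ldistrib algebra_simps H_add_left vec_eq_iff)

lemma is_g2_scaleR: "is_g2 B r \<Longrightarrow> is_g2 (\<lambda>z w. c *\<^sub>R B z w) (\<lambda>u v. c *\<^sub>R r u v)"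
  unfolding is_g2_def cbilin_def clin_def by (simp add: scaleR_vec_complex H_scale_left vec_eq_iff algebra_simps)

lemma subspace_g_2: "module.subspace vscale (g_2 H)"
proof -
  interpret vector_space "vscale :: real \<Rightarrow> ('n,'k) vf \<Rightarrow> _" by (rule vector_space_vscale)
  show ?thesis unfolding subspace_def g_2_eq
  proof (intro conjI ballI allI)
    show "0 \<in> {vf_2 B r |B r. is_g2 B r}" using vf_2_zero is_g2_zero by (metis (mono_tags, lifting) mem_Collect_eq)
  next
    fix x y assume "x \<in> {vf_2 B r |B r. is_g2 B r}" "y \<in> {vf_2 B r |B r. is_g2 B r}"
    then show "x + y \<in> {vf_2 B r |B r. is_g2 B r}" using vf_2_add is_g2_add by fastforce
  next
    fix c x assume "x \<in> {vf_2 B r |B r. is_g2 B r}"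
    then show "vscale c x \<in> {vf_2 B r |B r. is_g2 B r}" using vscale_vf_2 is_g2_scaleR by fastforce
  qed
qed

lemma is_g2_r_unique:
  assumes "is_g2 B r1" and "is_g2 B r2"
  shows "r1 = r2"
proof -
  interpret G1: g2_elem H B r1 by (rule g2_elemI) fact
  interpret G2: g2_elem H B r2 by (rule g2_elemI) fact
  have "r1 (rvec a) (rvec u) - r2 (rvec a) (rvec u) = 0" for a u
  proof (rule additive_eq_0_if_vanishes_on_H_diag[where L="\<lambda>a. r1 (rvec a) (rvec u) - r2 (rvec a) (rvec u)"])
    show "r1 (rvec (Re_vec (H z z))) (rvec u) - r2 (rvec (Re_vec (H z z))) (rvec u) = 0" for z
      using G1.Re_H_B[of z u] G2.Re_H_B[of z u] by (simp flip: H_diag_real)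
  qed (simp_all add: G1.r_simps G2.r_simps scaleR_vec_complex vector_ssub_ldistrib)
  then have on_real: "r1 (rvec a) (rvec u) = r2 (rvec a) (rvec u)" for a u by simp
  show ?thesis
  proof (rule ext, rule ext)
    fix v w
    show "r1 v w = r2 v w"
      by (subst (1 2) vec_complex_decomp[of v], subst (1 2) vec_complex_decomp[of w])
        (simp add: G1.r_simps G2.r_simps on_real)
  qed
qed

lemma ad2_inj:
  assumes "is_g2 B1 r1" and "is_g2 B2 r2" and eq: "ad2 B1 = ad2 B2"
  shows "B1 = B2"
proof -
  interpret G1: g2_elem H B1 r1 by (rule g2_elemI) fact
  interpret G2: g2_elem H B2 r2 by (rule g2_elemI) fact
  have "G2.Dmat = G1.Dmat"
    using tg2_coords.Dm_unique[OF G1.tg2_coords_ad2] G2.tg2_coords_ad2 by (simp add: eq)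
  then show ?thesis using G1.B_eq_B_of_D_Dmat G2.B_eq_B_of_D_Dmat by metis
qed

lemma tg2_eq_ad2:
  assumes "X2 \<in> tg2 H"
  obtains B r where "is_g2 B r" and "ad2 B = X2"
proof -
  obtain Cm sm Dm tm where "tg2_coords H X2 Cm sm Dm tm" using tg2_has_coords[OF assms] .
  then interpret X: tg2_coords H X2 Cm sm Dm tm .
  interpret G: g2_elem H "B_of_D Dm" "r_of_t tm" by (rule g2_elemI[OF X.is_g2_B_of_D])
  have "G.Dmat = Dm"
    by (intro ext) (simp add: matrix_eq G.Dmat_apply B_of_D_def X.Dm_zero)
  then have "tg2_coords H (ad2 (B_of_D Dm)) (Cmat (B_of_D Dm)) (smat (B_of_D Dm)) Dm G.tmat"
    using G.tg2_coords_ad2 by simp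
  then have "ad2 (B_of_D Dm) = X2" by (rule X.eq_if_same_Dm)
  with X.is_g2_B_of_D show thesis by (rule that)
qed

text \<open>Phi is defined on all vector fields, through their z-coefficient, so that it is linear
  everywhere.\<close>

definition Phi :: "('n,'k) vf \<Rightarrow> ('n,'k) vf \<Rightarrow> ('n,'k) vf \<Rightarrow> ('n,'k) vf" where
  "Phi X = ad2 (z_coeff X)"

lemma linear_Phi: "Vector_Spaces.linear vscale vscale3 Phi"
proof -
  have z_add: "z_coeff (X + Y) = (\<lambda>z w. z_coeff X z w + z_coeff Y z w)" for X Y
    by (simp add: z_coeff_def fun_eq_iff)
  have add: "Phi (X + Y) = Phi X + Phi Y" for X Y by (simp add: Phi_def z_add ad2_add)
  have z_scale: "z_coeff (vscale c X) = (\<lambda>z w. c *\<^sub>R z_coeff X z w)" for c X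
    by (simp add: z_coeff_def vscale_def fun_eq_iff)
  have scale: "Phi (vscale c X) = vscale3 c (Phi X)" for c X by (simp add: Phi_def z_scale ad2_scaleR)
  show ?thesis
    unfolding Vector_Spaces.linear_def module_hom_def module_hom_axioms_def
    by (simp add: vector_space_vscale vector_space_vscale3 module_iff_vector_space add scale)
qed

lemma Phi_image: "Phi ` g_2 H = tg2 H"
proof
  show "Phi ` g_2 H \<subseteq> tg2 H"
    by (auto simp: g_2_eq Phi_def intro: g2_elem.ad2_in_tg2[OF g2_elemI])
  show "tg2 H \<subseteq> Phi ` g_2 H"
  proof
    fix X2 assume "X2 \<in> tg2 H"
    then obtain B r where "is_g2 B r" "ad2 B = X2" by (rule tg2_eq_ad2)
    then have "vf_2 B r \<in> g_2 H" "Phi (vf_2 B r) = X2" by (auto simp: g_2_eq Phi_def)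
    then show "X2 \<in> Phi ` g_2 H" by (metis image_eqI)
  qed
qed

lemma inj_on_Phi: "inj_on Phi (g_2 H)"
proof
  fix X Y assume "X \<in> g_2 H" "Y \<in> g_2 H" and eq: "Phi X = Phi Y"
  then obtain B1 r1 B2 r2 where X: "X = vf_2 B1 r1" "is_g2 B1 r1" and Y: "Y = vf_2 B2 r2" "is_g2 B2 r2"
    by (auto simp: g_2_eq)
  have "B1 = B2" using ad2_inj[OF X(2) Y(2)] eq by (simp add: X Y Phi_def)
  moreover from this have "r1 = r2" using is_g2_r_unique X(2) Y(2) by blast
  ultimately show "X = Y" by (simp add: X Y)
qed

end

theorem lemma1p2:
  fixes H :: "complex^'n::finite \<Rightarrow> complex^'n \<Rightarrow> complex^'k::finite"
  assumes "hermitian_form H" and "nondegenerate H"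
  shows "vector_space.dim vscale (g_2 H) = vector_space.dim vscale3 (tg2 H)"
proof -
  interpret nondeg_herm H using assms by (rule nondeg_herm.intro)
  interpret vector_space_pair "vscale :: real \<Rightarrow> ('n,'k) vf \<Rightarrow> _" "vscale3 :: real \<Rightarrow> _ \<Rightarrow> (('n,'k) vf \<Rightarrow> _)"
    by (simp add: vector_space_pair_def vector_space_vscale vector_space_vscale3)
  have span: "vs1.span (g_2 H) = g_2 H" using subspace_g_2 by simp
  have "vs2.dim (Phi ` g_2 H) = vs1.dim (g_2 H)"
    by (rule dim_image_eq_of_inj_on_span[OF linear_Phi]) (simp add: span inj_on_Phi)
  then show ?thesis by (simp add: Phi_image)
qed

end
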